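(* Let $m>1$, $\chi>0$, and let $p\ge2$ be an integer. If $\alpha\ge0$, then any critical point of $\mathcal F^p_{m,\alpha}$ in $\mathcal R^p$ is a global minimizer of $\mathcal F^p_{m,\alpha}$ on $\mathcal R^p$. In addition, when $\chi=C_p$, there exists a minimizer of $\mathcal F^p_m$ on $\mathcal R^p$, and it is unique up to dilation (i.e. any two minimizers $V,V'$ satisfy $V'=\lambda V$ for some $\lambda>0$).
   Context: $\mathcal R^p=\{X\in\mathbb R^p: X_1<\dots<X_p,\ \sum_iX_i=0\}$. $\mathcal F^p_{m,\alpha}(X)=\frac1{m-1}\sum_{i=1}^{p-1}(X_{i+1}-X_i)^{1-m}-\frac{\chi}{m-1}\sum_{1\le i\ne j\le p}|X_i-X_j|^{1-m}+\alpha\frac{|X|^2}{2}$, $\mathcal F^p_m=\mathcal F^p_{m,0}$. $C_p$ is defined by $\frac1{C_p}=\max_{X\in\mathcal R^p}\frac{\sum_{1\le i\ne j\le p}|X_j-X_i|^{1-m}}{\sum_{i=1}^{p-1}(X_{i+1}-X_i)^{1-m}}$. A critical point is a point of $\mathcal R^p$ where the Euclidean gradient vanishes. *)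

theory Defs
  imports "HOL-Analysis.Analysis"
begin

text \<open>Points of R^p are represented as functions nat => real; the coordinates
  X_1,...,X_p of the paper are X 0, ..., X (p-1); coordinates with index >= p are 0.\<close>

definition Rp :: "nat \<Rightarrow> (nat \<Rightarrow> real) set" where
  "Rp p = {X. (\<forall>i. Suc i < p \<longrightarrow> X i < X (Suc i)) \<and> (\<Sum>i<p. X i) = 0
              \<and> (\<forall>i\<ge>p. X i = 0)}"

definition Fma :: "real \<Rightarrow> real \<Rightarrow> real \<Rightarrow> nat \<Rightarrow> (nat \<Rightarrow> real) \<Rightarrow> real" where
  "Fma m chi alpha p X =
     1 / (m - 1) * (\<Sum>i<p - 1. (X (Suc i) - X i) powr (1 - m))
     - chi / (m - 1) * (\<Sum>i<p. \<Sum>j\<in>{..<p} - {i}. \<bar>X i - X j\<bar> powr (1 - m))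
     + alpha * (\<Sum>i<p. (X i)\<^sup>2) / 2"

abbreviation Fm :: "real \<Rightarrow> real \<Rightarrow> nat \<Rightarrow> (nat \<Rightarrow> real) \<Rightarrow> real" where
  "Fm m chi p \<equiv> Fma m chi 0 p"

definition critical_point :: "real \<Rightarrow> real \<Rightarrow> real \<Rightarrow> nat \<Rightarrow> (nat \<Rightarrow> real) \<Rightarrow> bool" where
  "critical_point m chi alpha p X \<longleftrightarrow> X \<in> Rp p \<and>
     (\<forall>i<p. ((\<lambda>t. Fma m chi alpha p (X(i := X i + t))) has_real_derivative 0) (at 0))"

definition ratio :: "real \<Rightarrow> nat \<Rightarrow> (nat \<Rightarrow> real) \<Rightarrow> real" where
  "ratio m p X = (\<Sum>i<p. \<Sum>j\<in>{..<p} - {i}. \<bar>X j - X i\<bar> powr (1 - m))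
                 / (\<Sum>i<p - 1. (X (Suc i) - X i) powr (1 - m))"

definition Cp :: "real \<Rightarrow> nat \<Rightarrow> real" where
  "Cp m p = 1 / (SUP X\<in>Rp p. ratio m p X)"

definition is_minimizer :: "((nat \<Rightarrow> real) \<Rightarrow> real) \<Rightarrow> (nat \<Rightarrow> real) set \<Rightarrow> (nat \<Rightarrow> real) \<Rightarrow> bool" where
  "is_minimizer F S V \<longleftrightarrow> V \<in> S \<and> (\<forall>Y\<in>S. F V \<le> F Y)"

end

theory Submission
  imports Defs
begin

text \<open>Describe a configuration by its gaps and interpolate between two configurations by taking, gap by
  gap, the power mean of exponent \<open>1 - m\<close>. Along this path the nearest-neighbour energy is affine, the
  pair interaction is concave (power means of negative exponent are superadditive) and the confinement
  is convex, so \<open>Fma\<close> lies below its chords and a critical point is a global minimiser.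

  For \<open>chi = Cp\<close> one has \<open>Fm \<ge> 0\<close>, with equality exactly where the ratio defining \<open>Cp\<close> is maximal.
  The maximum is attained: in the variables \<open>u = gap powr (1 - m)\<close> the ratio extends continuously to
  the closed simplex, and vanishing coordinates can be made positive without lowering it. Uniqueness up
  to dilation is the equality case of superadditivity at the midpoint of two minimisers.\<close>

section \<open>Power means of negative exponent\<close>

lemma powr_neg_strict_convex_less:
  fixes k x y t :: real
  assumes k: "k > 0" and x: "x > 0" and xy: "x < y" and t: "0 < t" "t < 1"
  shows "((1-t)*x + t*y) powr (-k) < (1-t) * x powr (-k) + t * y powr (-k)"
proof -
  define f where "f = (\<lambda>x::real. x powr (-k))"
  define f' where "f' = (\<lambda>x::real. -k * x powr (-k-1))"
  define z where "z = (1-t)*x + t*y"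
  have zx: "z - x = t*(y-x)" and yz: "y - z = (1-t)*(y-x)" by (simp_all add: z_def algebra_simps)
  have xz: "x < z" using zx mult_pos_pos[of t "y-x"] xy t by linarith
  have zy: "z < y" using yz mult_pos_pos[of "1-t" "y-x"] xy t by linarith
  have D: "\<And>s. s > 0 \<Longrightarrow> (f has_real_derivative f' s) (at s)"
    unfolding f_def f'_def using has_real_derivative_powr by fastforce
  obtain a where a: "x < a" "a < z" "f z - f x = (z - x) * f' a"
    using MVT2[of x z f f'] D xz x by (meson less_le_trans)
  obtain b where b: "z < b" "b < y" "f y - f z = (y - z) * f' b"
    using MVT2[of z y f f'] D zy xz x by (meson less_le_trans less_trans)
  have "b powr (-k-1) < a powr (-k-1)"
    using a b x k by (intro powr_less_mono2_neg) auto
  hence "f' a < f' b" unfolding f'_def using k by simp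
  have e1: "f x - f z = -((z-x)*f' a)" and e2: "f y - f z = (y-z)*f' b" using a(3) b(3) by simp_all
  have "(1-t) * f x + t * f y - f z = (1-t)*(f x - f z) + t * (f y - f z)"
    by (simp add: algebra_simps)
  also have "\<dots> = (1-t)*(-((z-x)*f' a)) + t*((y-z)*f' b)"
    by (simp only: e1 e2)
  also have "\<dots> = t*(1-t)*(y-x)*(f' b - f' a)"
    by (simp add: zx yz algebra_simps)
  also have "\<dots> > 0" using \<open>f' a < f' b\<close> t xy by simp
  finally show ?thesis unfolding f_def z_def by simp
qed

lemma powr_neg_strict_convex:
  fixes k x y t :: real
  assumes k: "k > 0" and "x > 0" "y > 0" "x \<noteq> y" and t: "0 < t" "t < 1"
  shows "((1-t)*x + t*y) powr (-k) < (1-t) * x powr (-k) + t * y powr (-k)"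
proof (cases "x < y")
  case True then show ?thesis using powr_neg_strict_convex_less[OF k \<open>x > 0\<close> True t] by simp
next
  case False
  hence "y < x" using \<open>x \<noteq> y\<close> by simp
  from powr_neg_strict_convex_less[OF k \<open>y > 0\<close> this, of "1-t"] t show ?thesis
    by (simp add: algebra_simps)
qed

lemma powr_neg_convex:
  fixes k x y t :: real
  assumes "k > 0" "x > 0" "y > 0" "0 \<le> t" "t \<le> 1"
  shows "((1-t)*x + t*y) powr (-k) \<le> (1-t) * x powr (-k) + t * y powr (-k)"
  using assms powr_neg_strict_convex[of k x y t]
  by (cases "x = y \<or> t = 0 \<or> t = 1") (auto simp: algebra_simps)

lemma convex_comb_pos:
  fixes a b t :: real
  assumes "a > 0" "b > 0" "0 \<le> t" "t \<le> 1"
  shows "(1-t) * a + t * b > 0"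
  using assms by (cases "t = 1") (auto intro: add_pos_nonneg)

lemma powr_neg_powr_inverse: "k \<noteq> 0 \<Longrightarrow> x > 0 \<Longrightarrow> (x powr (-k)) powr (-1/k) = (x::real)"
  by (simp add: powr_powr)

definition power_mean :: "real \<Rightarrow> real \<Rightarrow> real \<Rightarrow> real \<Rightarrow> real" where
  "power_mean k t a b = ((1-t) * a powr (-k) + t * b powr (-k)) powr (-1/k)"

lemma power_mean_pos: "a > 0 \<Longrightarrow> b > 0 \<Longrightarrow> 0 \<le> t \<Longrightarrow> t \<le> 1 \<Longrightarrow> power_mean k t a b > 0"
  unfolding power_mean_def using convex_comb_pos[of "a powr (-k)" "b powr (-k)" t] by simp

lemma power_mean_powr:
  assumes "k > 0" "a > 0" "b > 0" "0 \<le> t" "t \<le> 1"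
  shows "power_mean k t a b powr (-k) = (1-t) * a powr (-k) + t * b powr (-k)"
  using assms convex_comb_pos[of "a powr (-k)" "b powr (-k)" t]
  by (simp add: power_mean_def powr_powr)

lemma power_mean_0 [simp]: "k \<noteq> 0 \<Longrightarrow> a > 0 \<Longrightarrow> power_mean k 0 a b = a"
  and power_mean_1 [simp]: "k \<noteq> 0 \<Longrightarrow> b > 0 \<Longrightarrow> power_mean k 1 a b = b"
  by (simp_all add: power_mean_def powr_powr)

lemma power_mean_le_convex_comb:
  assumes k: "k > 0" and "a > 0" "b > 0" "0 \<le> t" "t \<le> 1"
  shows "power_mean k t a b \<le> (1-t)*a + t*b"
proof -
  have c: "(1-t)*a + t*b > 0" using assms by (intro convex_comb_pos)
  have "((1-t) * a powr (-k) + t * b powr (-k)) powr (-1/k) \<le> (((1-t)*a + t*b) powr (-k)) powr (-1/k)"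
    using powr_neg_convex[OF assms] k c by (intro powr_mono2') auto
  thus ?thesis unfolding power_mean_def using powr_neg_powr_inverse[of k, OF _ c] k by simp
qed

text \<open>Convexity of \<open>x powr (-k)\<close> applied to \<open>a + b = A \<cdot> (a/A) + B \<cdot> (b/B)\<close>, weighted by \<open>A/(A+B)\<close>
  and \<open>B/(A+B)\<close>.\<close>
lemma powr_neg_sum_le:
  fixes k a b A B :: real
  assumes k: "k > 0" and pos: "a > 0" "b > 0" "A > 0" "B > 0"
  defines "R \<equiv> (A+B) powr (-k) * ((A/(A+B)) * (a/A) powr (-k) + (B/(A+B)) * (b/B) powr (-k))"
  shows "(a+b) powr (-k) \<le> R" and "a/A \<noteq> b/B \<Longrightarrow> (a+b) powr (-k) < R"
proof -
  define s where "s = B/(A+B)"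
  have s: "0 < s" "s < 1" "1 - s = A/(A+B)" using pos by (auto simp: s_def field_simps)
  have "(A/(A+B))*(a/A) = a/(A+B)" "(B/(A+B))*(b/B) = b/(A+B)" using pos by simp_all
  hence "(1-s)*(a/A) + s*(b/B) = (a+b)/(A+B)"
    unfolding s(3) unfolding s_def by (simp add: add_divide_distrib)
  hence ab: "a + b = (A+B) * ((1-s)*(a/A) + s*(b/B))" using pos by simp
  have "(1-s)*(a/A) + s*(b/B) > 0" using s pos by (intro convex_comb_pos) auto
  hence eq: "(a+b) powr (-k) = (A+B) powr (-k) * ((1-s)*(a/A) + s*(b/B)) powr (-k)"
    unfolding ab using pos by (simp add: powr_mult)
  have "(A+B) powr (-k) > 0" using pos by simp
  then show "(a+b) powr (-k) \<le> R" and "a/A \<noteq> b/B \<Longrightarrow> (a+b) powr (-k) < R"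
    unfolding R_def eq s(3)[symmetric] s_def[symmetric]
    using powr_neg_convex[OF k, of "a/A" "b/B" s] powr_neg_strict_convex[OF k, of "a/A" "b/B" s] s pos
    by (auto intro: mult_left_mono mult_strict_left_mono)
qed

lemma power_mean_normalised:
  assumes k: "k > 0" and "a0 > 0" "a1 > 0" "0 \<le> t" "t \<le> 1"
  shows "(1-t) * (a0 / power_mean k t a0 a1) powr (-k) + t * (a1 / power_mean k t a0 a1) powr (-k) = 1"
proof -
  have "power_mean k t a0 a1 > 0" using power_mean_pos assms by simp
  with power_mean_powr[OF assms] assms show ?thesis
    by (simp add: powr_divide field_simps)
qed

text \<open>A reverse Minkowski inequality; the strict form yields the equality case.\<close>
lemma power_mean_superadditive_powr:
  fixes k t a0 a1 b0 b1 :: real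
  assumes k: "k > 0" and a: "a0 > 0" "a1 > 0" and b: "b0 > 0" "b1 > 0" and t: "0 \<le> t" "t \<le> 1"
  defines "A \<equiv> power_mean k t a0 a1" and "B \<equiv> power_mean k t b0 b1"
  shows "(1-t) * (a0+b0) powr (-k) + t * (a1+b1) powr (-k) \<le> (A+B) powr (-k)"
    and "0 < t \<Longrightarrow> t < 1 \<Longrightarrow> a0/A \<noteq> b0/B \<or> a1/A \<noteq> b1/B \<Longrightarrow>
         (1-t) * (a0+b0) powr (-k) + t * (a1+b1) powr (-k) < (A+B) powr (-k)"
proof -
  have A: "A > 0" and B: "B > 0" unfolding A_def B_def using power_mean_pos a b t by auto
  define C where "C = (A+B) powr (-k)"
  define wA where "wA = A/(A+B)"
  define wB where "wB = B/(A+B)"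
  define R where "R = (\<lambda>a b. C * (wA * (a/A) powr (-k) + wB * (b/B) powr (-k)))"
  have J: "(a0+b0) powr (-k) \<le> R a0 b0" "(a1+b1) powr (-k) \<le> R a1 b1"
    and S: "a0/A \<noteq> b0/B \<Longrightarrow> (a0+b0) powr (-k) < R a0 b0" "a1/A \<noteq> b1/B \<Longrightarrow> (a1+b1) powr (-k) < R a1 b1"
    unfolding R_def C_def wA_def wB_def using powr_neg_sum_le[OF k] a b A B by auto
  have "(1-t) * R a0 b0 + t * R a1 b1 = C *
     (wA * ((1-t) * (a0/A) powr (-k) + t * (a1/A) powr (-k))
      + wB * ((1-t) * (b0/B) powr (-k) + t * (b1/B) powr (-k)))"
    unfolding R_def by (simp add: algebra_simps)
  also have "\<dots> = C * (wA + wB)"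
    using power_mean_normalised[OF k a t] power_mean_normalised[OF k b t]
    unfolding A_def[symmetric] B_def[symmetric] by simp
  also have "\<dots> = (A+B) powr (-k)"
    using A B unfolding C_def wA_def wB_def by (simp add: add_divide_distrib[symmetric])
  finally have RC: "(1-t) * R a0 b0 + t * R a1 b1 = (A+B) powr (-k)" .
  show "(1-t) * (a0+b0) powr (-k) + t * (a1+b1) powr (-k) \<le> (A+B) powr (-k)"
    unfolding RC[symmetric] using J t by (intro add_mono mult_left_mono) auto
  assume "0 < t" "t < 1" "a0/A \<noteq> b0/B \<or> a1/A \<noteq> b1/B"
  then show "(1-t) * (a0+b0) powr (-k) + t * (a1+b1) powr (-k) < (A+B) powr (-k)"
    unfolding RC[symmetric] using J S
    by (auto intro: add_less_le_mono add_le_less_mono mult_strict_left_mono mult_left_mono)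
qed

lemma power_mean_superadditive:
  fixes k t a0 a1 b0 b1 :: real
  assumes k: "k > 0" and a: "a0 > 0" "a1 > 0" and b: "b0 > 0" "b1 > 0" and t: "0 \<le> t" "t \<le> 1"
  shows "power_mean k t a0 a1 + power_mean k t b0 b1 \<le> power_mean k t (a0+b0) (a1+b1)"
proof -
  define A where "A = power_mean k t a0 a1 + power_mean k t b0 b1"
  have A: "A > 0" unfolding A_def using power_mean_pos a b t by (simp add: add_pos_pos)
  have "(1-t) * (a0+b0) powr (-k) + t * (a1+b1) powr (-k) > 0"
    using a b t by (intro convex_comb_pos) auto
  hence "(A powr (-k)) powr (-1/k) \<le> ((1-t) * (a0+b0) powr (-k) + t * (a1+b1) powr (-k)) powr (-1/k)"
    using power_mean_superadditive_powr(1)[OF k a b t] k unfolding A_def by (intro powr_mono2') auto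
  thus ?thesis unfolding power_mean_def[of k t "a0+b0"] A_def[symmetric]
    using powr_neg_powr_inverse[of k A] A k by simp
qed

lemma power_mean_superadditive_eq_imp_proportional:
  fixes k t a0 a1 b0 b1 :: real
  assumes k: "k > 0" and a: "a0 > 0" "a1 > 0" and b: "b0 > 0" "b1 > 0" and t: "0 < t" "t < 1"
    and eq: "power_mean k t a0 a1 + power_mean k t b0 b1 = power_mean k t (a0+b0) (a1+b1)"
  shows "a0 * b1 = a1 * b0"
proof -
  have t': "0 \<le> t" "t \<le> 1" using t by auto
  define A where "A = power_mean k t a0 a1"
  define B where "B = power_mean k t b0 b1"
  have A: "A > 0" and B: "B > 0" unfolding A_def B_def using power_mean_pos a b t' by auto
  have "(1-t) * (a0+b0) powr (-k) + t * (a1+b1) powr (-k) = (A+B) powr (-k)"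
    using power_mean_powr[OF k _ _ t', of "a0+b0" "a1+b1"] a b eq unfolding A_def B_def by simp
  hence "a0/A = b0/B \<and> a1/A = b1/B"
    using power_mean_superadditive_powr(2)[OF k a b t' t] unfolding A_def B_def by fastforce
  hence "a0 = A*b0/B" "a1 = A*b1/B" using A B by (auto simp: field_simps)
  thus ?thesis by simp
qed

lemma power_mean_sum_superadditive:
  fixes k t :: real and f h :: "'a \<Rightarrow> real"
  assumes k: "k > 0" and t: "0 \<le> t" "t \<le> 1"
    and S: "finite S" "S \<noteq> {}" and pos: "\<forall>l\<in>S. f l > 0 \<and> h l > 0"
  shows "(\<Sum>l\<in>S. power_mean k t (f l) (h l)) \<le> power_mean k t (\<Sum>l\<in>S. f l) (\<Sum>l\<in>S. h l)"
  using S pos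
proof (induction S rule: finite_ne_induct)
  case (insert x F)
  have "(\<Sum>l\<in>F. f l) > 0" "(\<Sum>l\<in>F. h l) > 0"
    using insert by (auto intro!: sum_pos)
  then have "power_mean k t (f x) (h x) + power_mean k t (\<Sum>l\<in>F. f l) (\<Sum>l\<in>F. h l)
      \<le> power_mean k t (f x + (\<Sum>l\<in>F. f l)) (h x + (\<Sum>l\<in>F. h l))"
    using insert by (intro power_mean_superadditive[OF k _ _ _ _ t]) auto
  with insert show ?case by simp
qed simp

lemma power_mean_has_derivative_0:
  assumes k: "k > 0" and a: "a > 0"
  shows "((\<lambda>t. power_mean k t a b) has_real_derivative
           (-1/k) * (a powr (-k)) powr (-1/k - 1) * (b powr (-k) - a powr (-k))) (at 0)"
proof -
  have "((\<lambda>t. (1-t) * a powr (-k) + t * b powr (-k)) has_real_derivative b powr (-k) - a powr (-k)) (at 0)"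
    by (auto intro!: derivative_eq_intros)
  from DERIV_fun_powr[OF this, of "-1/k"] a show ?thesis unfolding power_mean_def by simp
qed

section \<open>Gap coordinates\<close>

definition gap :: "(nat \<Rightarrow> real) \<Rightarrow> nat \<Rightarrow> real" where
  "gap X l = X (Suc l) - X l"

text \<open>The point of \<open>Rp p\<close> whose consecutive gaps are \<open>g 0, \<dots>, g (p-2)\<close>: partial sums, centred.\<close>
definition of_gaps :: "nat \<Rightarrow> (nat \<Rightarrow> real) \<Rightarrow> nat \<Rightarrow> real" where
  "of_gaps p g i = (if i < p then (\<Sum>l<i. g l) - (\<Sum>q<p. \<Sum>l<q. g l) / real p else 0)"

definition gap_sum :: "(nat \<Rightarrow> real) \<Rightarrow> nat \<Rightarrow> nat \<Rightarrow> real" where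
  "gap_sum g i j = (\<Sum>l\<in>{min i j..<max i j}. g l)"

lemma gap_sum_commute: "gap_sum g i j = gap_sum g j i"
  unfolding gap_sum_def by (simp add: min.commute max.commute)

lemma gap_sum_pos:
  "\<forall>l. Suc l < p \<longrightarrow> g l > 0 \<Longrightarrow> i < p \<Longrightarrow> j < p \<Longrightarrow> i \<noteq> j \<Longrightarrow> gap_sum g i j > 0"
  unfolding gap_sum_def by (intro sum_pos) (auto simp: min_def max_def split: if_splits)

lemma gap_sum_nonneg:
  "\<forall>l. Suc l < p \<longrightarrow> g l > 0 \<Longrightarrow> i < p \<Longrightarrow> j < p \<Longrightarrow> gap_sum g i j \<ge> 0"
  unfolding gap_sum_def by (intro sum_nonneg) (auto simp: min_def max_def less_imp_le split: if_splits)

lemma of_gaps_diff: "j \<le> i \<Longrightarrow> i < p \<Longrightarrow> of_gaps p g i - of_gaps p g j = (\<Sum>l\<in>{j..<i}. g l)"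
  unfolding of_gaps_def using sum.atLeastLessThan_concat[of 0 j i g] by (simp add: atLeast0LessThan)

lemma of_gaps_Suc: "Suc i < p \<Longrightarrow> of_gaps p g (Suc i) - of_gaps p g i = g i"
  using of_gaps_diff[of i "Suc i" p g] by simp

lemma dist_of_gaps:
  assumes "i < p" "j < p" "\<forall>l. Suc l < p \<longrightarrow> g l \<ge> 0"
  shows "\<bar>of_gaps p g i - of_gaps p g j\<bar> = gap_sum g i j"
proof (cases "j \<le> i")
  case True
  have "(\<Sum>l\<in>{j..<i}. g l) \<ge> 0" using assms by (intro sum_nonneg) auto
  then show ?thesis using of_gaps_diff[OF True assms(1), of g] True unfolding gap_sum_def by simp
next
  case False
  have "(\<Sum>l\<in>{i..<j}. g l) \<ge> 0" using assms by (intro sum_nonneg) auto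
  then show ?thesis using of_gaps_diff[of i j p g] False assms unfolding gap_sum_def by simp
qed

lemma sum_of_gaps: "(\<Sum>i<p. of_gaps p g i) = 0"
  by (cases "p = 0") (simp_all add: of_gaps_def sum_subtractf)

lemma of_gaps_in_Rp: "\<forall>l. Suc l < p \<longrightarrow> g l > 0 \<Longrightarrow> of_gaps p g \<in> Rp p"
  unfolding Rp_def using sum_of_gaps[of p g] of_gaps_Suc[of _ p g]
  by (auto simp: of_gaps_def[of p g])

lemma gap_pos: "X \<in> Rp p \<Longrightarrow> Suc l < p \<Longrightarrow> gap X l > 0"
  unfolding Rp_def gap_def by auto

lemma of_gaps_gap:
  assumes X: "X \<in> Rp p"
  shows "of_gaps p (gap X) = X"
proof
  fix i
  have tel: "\<And>i. (\<Sum>l<i. gap X l) = X i - X 0" unfolding gap_def by (rule sum_lessThan_telescope)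
  have "(\<Sum>q<p. X q) = 0" using X unfolding Rp_def by simp
  hence "(\<Sum>q<p. X q - X 0) = - real p * X 0" by (simp add: sum_subtractf)
  then show "of_gaps p (gap X) i = X i"
    using X unfolding of_gaps_def tel Rp_def by (cases "i < p") auto
qed

lemma of_gaps_scale: "of_gaps p (\<lambda>l. c * g l) = (\<lambda>i. c * of_gaps p g i)"
  unfolding of_gaps_def by (auto simp: sum_distrib_left[symmetric] algebra_simps)

lemma of_gaps_cong:
  assumes H: "\<forall>l. Suc l < p \<longrightarrow> g l = h l"
  shows "of_gaps p g = of_gaps p h"
proof -
  have E: "(\<Sum>l<i. g l) = (\<Sum>l<i. h l)" if "i < p" for i
  proof (rule sum.cong)
    fix l assume "l \<in> {..<i}"
    then show "g l = h l" using H that by simp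
  qed simp
  have "(\<Sum>q<p. \<Sum>l<q. g l) = (\<Sum>q<p. \<Sum>l<q. h l)" by (rule sum.cong) (simp_all add: E)
  then show ?thesis unfolding of_gaps_def by (auto simp: E)
qed

lemma Rp_strict_mono:
  assumes X: "X \<in> Rp p" and "i < j" "j < p"
  shows "X i < X j"
  using assms(2,3)
proof (induction j)
  case (Suc j)
  have "X j < X (Suc j)" using X Suc.prems unfolding Rp_def by auto
  then show ?case using Suc by (cases "i = j") auto
qed simp

lemma sum_sq_diff_centred:
  fixes X :: "nat \<Rightarrow> real"
  assumes "(\<Sum>i<p. X i) = 0"
  shows "(\<Sum>i<p. \<Sum>j<p. (X i - X j)^2) = 2 * real p * (\<Sum>i<p. (X i)^2)"
proof -
  have "(\<Sum>i<p. \<Sum>j<p. (X i - X j)^2) = (\<Sum>i<p. real p * (X i)^2 + (\<Sum>j<p. (X j)^2) - 2 * X i * (\<Sum>j<p. X j))"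
    by (intro sum.cong refl)
       (simp add: power2_diff sum.distrib sum_subtractf sum_distrib_left)
  also have "\<dots> = 2 * real p * (\<Sum>i<p. (X i)^2)"
    using assms by (simp add: sum.distrib sum_distrib_left mult.assoc)
  finally show ?thesis .
qed

definition adjacent_energy :: "real \<Rightarrow> nat \<Rightarrow> (nat \<Rightarrow> real) \<Rightarrow> real" where
  "adjacent_energy m p g = (\<Sum>i<p-1. g i powr (1-m))"

definition pair_energy :: "real \<Rightarrow> nat \<Rightarrow> (nat \<Rightarrow> real) \<Rightarrow> real" where
  "pair_energy m p g = (\<Sum>i<p. \<Sum>j\<in>{..<p}-{i}. gap_sum g i j powr (1-m))"

definition pair_spread :: "nat \<Rightarrow> (nat \<Rightarrow> real) \<Rightarrow> real" where
  "pair_spread p g = (\<Sum>i<p. \<Sum>j<p. (gap_sum g i j)^2)"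

lemma Fma_of_gaps:
  assumes g: "\<forall>l. Suc l < p \<longrightarrow> g l > 0" and p: "p \<ge> 1"
  shows "Fma m chi alpha p (of_gaps p g) =
    1/(m-1) * adjacent_energy m p g - chi/(m-1) * pair_energy m p g + alpha/(4 * real p) * pair_spread p g"
proof -
  define X where "X = of_gaps p g"
  have g0: "\<forall>l. Suc l < p \<longrightarrow> g l \<ge> 0" using g by (simp add: less_imp_le)
  have T1: "(\<Sum>i<p - 1. (X (Suc i) - X i) powr (1 - m)) = adjacent_energy m p g"
    unfolding adjacent_energy_def X_def by (intro sum.cong) (auto simp: of_gaps_Suc)
  have T2: "(\<Sum>i<p. \<Sum>j\<in>{..<p} - {i}. \<bar>X i - X j\<bar> powr (1 - m)) = pair_energy m p g"
    unfolding pair_energy_def X_def using dist_of_gaps[OF _ _ g0] by (intro sum.cong) auto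
  have "(\<Sum>i<p. \<Sum>j<p. (X i - X j)^2) = pair_spread p g"
    unfolding pair_spread_def X_def using dist_of_gaps[OF _ _ g0]
    by (intro sum.cong refl) (metis power2_abs lessThan_iff)
  hence T3: "(\<Sum>i<p. (X i)^2) = pair_spread p g / (2 * real p)"
    using sum_sq_diff_centred[of X p] sum_of_gaps[of p g] p unfolding X_def by (simp add: field_simps)
  show ?thesis unfolding Fma_def X_def[symmetric] T1 T2 T3 by simp
qed

lemma ratio_of_gaps:
  assumes g: "\<forall>l. Suc l < p \<longrightarrow> g l > 0"
  shows "ratio m p (of_gaps p g) = pair_energy m p g / adjacent_energy m p g"
proof -
  define X where "X = of_gaps p g"
  have g0: "\<forall>l. Suc l < p \<longrightarrow> g l \<ge> 0" using g by (simp add: less_imp_le)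
  have "(\<Sum>i<p - 1. (X (Suc i) - X i) powr (1 - m)) = adjacent_energy m p g"
    unfolding adjacent_energy_def X_def by (intro sum.cong) (auto simp: of_gaps_Suc)
  moreover have "(\<Sum>i<p. \<Sum>j\<in>{..<p} - {i}. \<bar>X j - X i\<bar> powr (1 - m)) = pair_energy m p g"
    unfolding pair_energy_def X_def using dist_of_gaps[OF _ _ g0] gap_sum_commute by (intro sum.cong) auto
  ultimately show ?thesis unfolding ratio_def X_def[symmetric] by simp
qed

lemma adjacent_energy_pos:
  assumes "p \<ge> 2" "\<forall>l. Suc l < p \<longrightarrow> g l > 0"
  shows "adjacent_energy m p g > 0"
proof -
  have "\<And>i. i < p - 1 \<Longrightarrow> g i powr (1-m) > 0"
    using assms(2) by (auto simp: less_diff_conv)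
  moreover have "0 \<in> {..<p-1}" using assms(1) by simp
  ultimately show ?thesis unfolding adjacent_energy_def by (intro sum_pos) blast+
qed

section \<open>Convexity along power-mean interpolation of gaps\<close>

definition gap_path :: "real \<Rightarrow> real \<Rightarrow> (nat \<Rightarrow> real) \<Rightarrow> (nat \<Rightarrow> real) \<Rightarrow> nat \<Rightarrow> real" where
  "gap_path k t g0 g1 l = power_mean k t (g0 l) (g1 l)"

context
  fixes m t :: real and p :: nat and g0 g1 :: "nat \<Rightarrow> real"
  assumes m: "m > 1"
    and g0: "\<forall>l. Suc l < p \<longrightarrow> g0 l > 0" and g1: "\<forall>l. Suc l < p \<longrightarrow> g1 l > 0"
    and t: "0 \<le> t" "t \<le> 1"
begin

abbreviation "g_t \<equiv> gap_path (m-1) t g0 g1"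

lemma gap_path_pos: "\<forall>l. Suc l < p \<longrightarrow> g_t l > 0"
  unfolding gap_path_def using g0 g1 t power_mean_pos by auto

lemma adjacent_energy_gap_path:
  "adjacent_energy m p g_t = (1-t) * adjacent_energy m p g0 + t * adjacent_energy m p g1"
proof -
  have "adjacent_energy m p g_t = (\<Sum>i<p-1. (1-t) * g0 i powr (1-m) + t * g1 i powr (1-m))"
    unfolding adjacent_energy_def gap_path_def
    using power_mean_powr[of "m-1" "g0 _" "g1 _" t] m g0 g1 t
    by (intro sum.cong) (auto simp: less_diff_conv)
  thus ?thesis unfolding adjacent_energy_def by (simp add: sum.distrib sum_distrib_left)
qed

lemma pair_energy_gap_path_term:
  assumes ij: "i < p" "j < p" "i \<noteq> j"
  shows "(1-t) * gap_sum g0 i j powr (1-m) + t * gap_sum g1 i j powr (1-m) \<le> gap_sum g_t i j powr (1-m)"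
proof -
  have D0: "gap_sum g0 i j > 0" and D1: "gap_sum g1 i j > 0" and Dt: "gap_sum g_t i j > 0"
    using gap_sum_pos[OF g0 ij] gap_sum_pos[OF g1 ij] gap_sum_pos[OF gap_path_pos ij] .
  have "gap_sum g_t i j \<le> power_mean (m-1) t (gap_sum g0 i j) (gap_sum g1 i j)"
    unfolding gap_sum_def gap_path_def using ij g0 g1 m
    by (intro power_mean_sum_superadditive[OF _ t]) (auto simp: min_def max_def)
  hence "power_mean (m-1) t (gap_sum g0 i j) (gap_sum g1 i j) powr (-(m-1)) \<le> gap_sum g_t i j powr (-(m-1))"
    using Dt m by (intro powr_mono2') auto
  then show ?thesis using power_mean_powr[of "m-1", OF _ D0 D1 t] m by simp
qed

lemma pair_energy_gap_path:
  "(1-t) * pair_energy m p g0 + t * pair_energy m p g1 \<le> pair_energy m p g_t"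
proof -
  have "(1-t) * pair_energy m p g0 + t * pair_energy m p g1 =
     (\<Sum>i<p. \<Sum>j\<in>{..<p}-{i}. (1-t) * gap_sum g0 i j powr (1-m) + t * gap_sum g1 i j powr (1-m))"
    unfolding pair_energy_def by (simp add: sum.distrib sum_distrib_left)
  also have "\<dots> \<le> pair_energy m p g_t"
    unfolding pair_energy_def using pair_energy_gap_path_term by (intro sum_mono) auto
  finally show ?thesis .
qed

lemma pair_energy_gap_path_term_eq:
  assumes le: "pair_energy m p g_t \<le> (1-t) * pair_energy m p g0 + t * pair_energy m p g1"
    and ij: "i < p" "j < p" "i \<noteq> j"
  shows "gap_sum g_t i j powr (1-m) = (1-t) * gap_sum g0 i j powr (1-m) + t * gap_sum g1 i j powr (1-m)"
proof -
  define d where "d = (\<lambda>i j. gap_sum g_t i j powr (1-m)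
    - ((1-t) * gap_sum g0 i j powr (1-m) + t * gap_sum g1 i j powr (1-m)))"
  have d: "\<forall>i\<in>{..<p}. \<forall>j\<in>{..<p}-{i}. d i j \<ge> 0"
    unfolding d_def using pair_energy_gap_path_term by auto
  hence inner: "\<forall>i\<in>{..<p}. (\<Sum>j\<in>{..<p}-{i}. d i j) \<ge> 0" by (auto intro: sum_nonneg)
  have "(\<Sum>i<p. \<Sum>j\<in>{..<p}-{i}. d i j)
      = pair_energy m p g_t - ((1-t) * pair_energy m p g0 + t * pair_energy m p g1)"
    unfolding d_def pair_energy_def by (simp add: sum_subtractf sum.distrib sum_distrib_left)
  with le inner have "(\<Sum>i<p. \<Sum>j\<in>{..<p}-{i}. d i j) = 0"
    by (metis (no_types, lifting) diff_le_0_iff_le order_antisym sum_nonneg)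
  hence "\<forall>i\<in>{..<p}. (\<Sum>j\<in>{..<p}-{i}. d i j) = 0"
    using sum_nonneg_eq_0_iff[of "{..<p}" "\<lambda>i. \<Sum>j\<in>{..<p}-{i}. d i j"] inner by simp
  hence "\<forall>j\<in>{..<p}-{i}. d i j = 0"
    using sum_nonneg_eq_0_iff[of "{..<p}-{i}" "d i"] d ij by simp
  hence "d i j = 0" using ij by simp
  then show ?thesis unfolding d_def by simp
qed

lemma pair_spread_gap_path:
  "pair_spread p g_t \<le> (1-t) * pair_spread p g0 + t * pair_spread p g1"
proof -
  have "(gap_sum g_t i j)^2 \<le> (1-t) * (gap_sum g0 i j)^2 + t * (gap_sum g1 i j)^2"
    if ij: "i < p" "j < p" for i j
  proof -
    have "gap_sum g_t i j \<le> (\<Sum>l\<in>{min i j..<max i j}. (1-t) * g0 l + t * g1 l)"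
      unfolding gap_sum_def gap_path_def using ij g0 g1 t m
      by (intro sum_mono power_mean_le_convex_comb) (auto simp: min_def max_def split: if_splits)
    also have "\<dots> = (1-t) * gap_sum g0 i j + t * gap_sum g1 i j"
      unfolding gap_sum_def by (simp add: sum.distrib sum_distrib_left)
    finally have "(gap_sum g_t i j)^2 \<le> ((1-t) * gap_sum g0 i j + t * gap_sum g1 i j)^2"
      using gap_sum_nonneg[OF gap_path_pos ij] by (intro power_mono)
    also have "\<dots> \<le> (1-t) * (gap_sum g0 i j)^2 + t * (gap_sum g1 i j)^2"
      using convex_onD[OF convex_power2, of t] t by simp
    finally show ?thesis .
  qed
  then have "pair_spread p g_t \<le> (\<Sum>i<p. \<Sum>j<p. (1-t) * (gap_sum g0 i j)^2 + t * (gap_sum g1 i j)^2)"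
    unfolding pair_spread_def by (intro sum_mono) auto
  thus ?thesis unfolding pair_spread_def by (simp add: sum.distrib sum_distrib_left)
qed

lemma Fma_gap_path_le_chord:
  assumes p: "p \<ge> 1" and chi: "chi \<ge> 0" and alpha: "alpha \<ge> 0"
  shows "Fma m chi alpha p (of_gaps p g_t)
    \<le> (1-t) * Fma m chi alpha p (of_gaps p g0) + t * Fma m chi alpha p (of_gaps p g1)"
proof -
  define c1 where "c1 = 1/(m-1)"
  define c2 where "c2 = chi/(m-1)"
  define c3 where "c3 = alpha/(4*real p)"
  have "c2 * ((1-t) * pair_energy m p g0 + t * pair_energy m p g1) \<le> c2 * pair_energy m p g_t"
    using pair_energy_gap_path chi m unfolding c2_def by (intro mult_left_mono) auto
  moreover have "c3 * pair_spread p g_t \<le> c3 * ((1-t) * pair_spread p g0 + t * pair_spread p g1)"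
    using pair_spread_gap_path alpha unfolding c3_def by (intro mult_left_mono) auto
  ultimately show ?thesis
    unfolding Fma_of_gaps[OF gap_path_pos p] Fma_of_gaps[OF g0 p] Fma_of_gaps[OF g1 p]
      adjacent_energy_gap_path c1_def[symmetric] c2_def[symmetric] c3_def[symmetric]
    by (simp add: algebra_simps)
qed

end

section \<open>Critical points are global minimisers\<close>

lemma DERIV_abs_powr:
  fixes f :: "real \<Rightarrow> real"
  assumes d: "(f has_real_derivative f') (at x)" and nz: "f x \<noteq> 0"
  shows "((\<lambda>t. \<bar>f t\<bar> powr a) has_real_derivative a * \<bar>f x\<bar> powr (a-1) * (sgn (f x) * f')) (at x)"
proof -
  define s where "s = sgn (f x)"
  have lim: "(f \<longlongrightarrow> f x) (nhds x)"
    using DERIV_continuous[OF d] by (simp add: isCont_def tendsto_at_iff_tendsto_nhds)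
  have "eventually (\<lambda>t. 0 < s * f t) (nhds x)"
  proof (cases "f x > 0")
    case True
    then show ?thesis using order_tendstoD(1)[OF lim True] by (simp add: s_def)
  next
    case False
    hence "f x < 0" using nz by simp
    then show ?thesis using order_tendstoD(2)[OF lim \<open>f x < 0\<close>] by (simp add: s_def mult_neg_neg)
  qed
  hence ev: "eventually (\<lambda>t. \<bar>f t\<bar> powr a = (s * f t) powr a) (nhds x)"
    by (rule eventually_mono) (auto simp: s_def sgn_if split: if_splits)
  have "s * f x = \<bar>f x\<bar>" and "s * f x > 0" using nz by (auto simp: s_def sgn_if)
  with DERIV_fun_powr[OF DERIV_cmult[OF d, of s], of a]
  have "((\<lambda>t. (s * f t) powr a) has_real_derivative a * \<bar>f x\<bar> powr (a-1) * (s * f')) (at x)"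
    by simp
  then show ?thesis unfolding s_def[symmetric] using DERIV_cong_ev[OF refl ev refl] by simp
qed

definition Fma_deriv :: "real \<Rightarrow> real \<Rightarrow> real \<Rightarrow> nat \<Rightarrow> (nat \<Rightarrow> real) \<Rightarrow> (nat \<Rightarrow> real) \<Rightarrow> real" where
  "Fma_deriv m chi alpha p X v =
     (\<Sum>i<p-1. - ((X (Suc i) - X i) powr (-m)) * (v (Suc i) - v i))
   + (\<Sum>i<p. \<Sum>j\<in>{..<p}-{i}. chi * \<bar>X i - X j\<bar> powr (-m) * sgn (X i - X j) * (v i - v j))
   + (\<Sum>i<p. alpha * X i * v i)"

lemma Fma_has_derivative_along:
  fixes x :: "real \<Rightarrow> nat \<Rightarrow> real"
  assumes m: "m > 1" and X: "X \<in> Rp p"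
    and x0: "\<forall>i<p. x 0 i = X i"
    and dx: "\<forall>i<p. ((\<lambda>t. x t i) has_real_derivative v i) (at 0)"
  shows "((\<lambda>t. Fma m chi alpha p (x t)) has_real_derivative Fma_deriv m chi alpha p X v) (at 0)"
proof -
  have dxdiff: "((\<lambda>t. x t i - x t j) has_real_derivative v i - v j) (at 0)" if "i < p" "j < p" for i j
    using dx that by (intro DERIV_diff) auto
  have D1: "((\<lambda>t. \<Sum>i<p-1. (x t (Suc i) - x t i) powr (1-m)) has_real_derivative
      (\<Sum>i<p-1. (1-m) * ((X (Suc i) - X i) powr (-m) * (v (Suc i) - v i)))) (at 0)"
  proof (rule DERIV_sum)
    fix i assume "i \<in> {..<p-1}"
    hence i: "Suc i < p" by auto
    have "x 0 (Suc i) - x 0 i > 0" using x0 Rp_strict_mono[OF X, of i "Suc i"] i by simp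
    from DERIV_fun_powr[OF dxdiff this, of "1-m"] show "((\<lambda>t. (x t (Suc i) - x t i) powr (1-m))
        has_real_derivative (1-m) * ((X (Suc i) - X i) powr (-m) * (v (Suc i) - v i))) (at 0)"
      using x0 i by (simp add: mult.assoc)
  qed
  have D2: "((\<lambda>t. \<Sum>i<p. \<Sum>j\<in>{..<p}-{i}. \<bar>x t i - x t j\<bar> powr (1-m)) has_real_derivative
      (\<Sum>i<p. \<Sum>j\<in>{..<p}-{i}. (1-m) * (\<bar>X i - X j\<bar> powr (-m) * sgn (X i - X j) * (v i - v j)))) (at 0)"
  proof (rule DERIV_sum, rule DERIV_sum)
    fix i j assume i: "i \<in> {..<p}" and j: "j \<in> {..<p}-{i}"
    have "X i \<noteq> X j" using Rp_strict_mono[OF X, of i j] Rp_strict_mono[OF X, of j i] i j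
      by (cases "i < j") auto
    hence "x 0 i - x 0 j \<noteq> 0" using x0 i j by auto
    from DERIV_abs_powr[OF dxdiff this, of "1-m"] i j show "((\<lambda>t. \<bar>x t i - x t j\<bar> powr (1-m))
        has_real_derivative (1-m) * (\<bar>X i - X j\<bar> powr (-m) * sgn (X i - X j) * (v i - v j))) (at 0)"
      using x0 by (simp add: mult.assoc)
  qed
  have D3: "((\<lambda>t. \<Sum>i<p. (x t i)^2) has_real_derivative (\<Sum>i<p. 2 * X i * v i)) (at 0)"
    using dx x0 by (intro DERIV_sum) (auto intro!: derivative_eq_intros)
  have "((\<lambda>t. Fma m chi alpha p (x t)) has_real_derivative
     1/(m-1) * (\<Sum>i<p-1. (1-m) * ((X (Suc i) - X i) powr (-m) * (v (Suc i) - v i)))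
     - chi/(m-1) * (\<Sum>i<p. \<Sum>j\<in>{..<p}-{i}. (1-m) * (\<bar>X i - X j\<bar> powr (-m) * sgn (X i - X j) * (v i - v j)))
     + alpha * (\<Sum>i<p. 2 * X i * v i) / 2) (at 0)"
    unfolding Fma_def by (intro DERIV_add DERIV_diff DERIV_cmult DERIV_cdivide D1 D2 D3)
  moreover have "\<And>a. 1/(m-1) * ((1-m) * a) = - a" "\<And>a. chi/(m-1) * ((1-m) * a) = - (chi * a)"
    using m by (simp_all add: field_simps)
  ultimately show ?thesis unfolding Fma_deriv_def
    by (simp add: sum_distrib_left sum_divide_distrib sum_negf mult.assoc)
qed

lemma linear_functional_coordinate_expansion:
  fixes L :: "(nat \<Rightarrow> real) \<Rightarrow> real"
  assumes add: "\<And>v w. L (\<lambda>i. v i + w i) = L v + L w"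
    and scale: "\<And>c v. L (\<lambda>i. c * v i) = c * L v"
    and local: "\<And>v w. \<forall>i<p. v i = w i \<Longrightarrow> L v = L w"
  shows "L v = (\<Sum>q<p. v q * L (\<lambda>i. if i = q then 1 else 0))"
proof -
  have L_sum: "L (\<lambda>i. \<Sum>q\<in>S. f q i) = (\<Sum>q\<in>S. L (f q))" if "finite S" for S and f :: "nat \<Rightarrow> nat \<Rightarrow> real"
    using that
  proof (induction S rule: finite_induct)
    case empty then show ?case using scale[of 0 "\<lambda>i. 0"] by simp
  next
    case (insert x F)
    then show ?case using add[of "f x" "\<lambda>i. \<Sum>q\<in>F. f q i"] by simp
  qed
  have "\<forall>i<p. v i = (\<Sum>q<p. v q * (if i = q then 1 else 0))" by (simp add: if_distrib cong: if_cong)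
  hence "L v = L (\<lambda>i. \<Sum>q<p. v q * (if i = q then 1 else 0))" by (rule local)
  also have "\<dots> = (\<Sum>q<p. v q * L (\<lambda>i. if i = q then 1 else 0))"
    using L_sum scale by simp
  finally show ?thesis .
qed

lemma Fma_deriv_coordinate_expansion:
  "Fma_deriv m chi alpha p X v = (\<Sum>q<p. v q * Fma_deriv m chi alpha p X (\<lambda>i. if i = q then 1 else 0))"
proof (rule linear_functional_coordinate_expansion)
  show "Fma_deriv m chi alpha p X (\<lambda>i. v i + w i) = Fma_deriv m chi alpha p X v + Fma_deriv m chi alpha p X w"
    for v w unfolding Fma_deriv_def by (simp add: sum.distrib[symmetric] algebra_simps)
  show "Fma_deriv m chi alpha p X (\<lambda>i. c * v i) = c * Fma_deriv m chi alpha p X v"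
    for c v unfolding Fma_deriv_def by (simp add: sum_distrib_left algebra_simps)
  show "Fma_deriv m chi alpha p X v = Fma_deriv m chi alpha p X w" if "\<forall>i<p. v i = w i" for v w
    unfolding Fma_deriv_def using that by (intro arg_cong2[where f = "(+)"] sum.cong) auto
qed

lemma critical_point_Fma_deriv:
  assumes m: "m > 1" and c: "critical_point m chi alpha p X"
  shows "Fma_deriv m chi alpha p X v = 0"
proof -
  have X: "X \<in> Rp p" using c unfolding critical_point_def by simp
  have "Fma_deriv m chi alpha p X (\<lambda>i. if i = q then 1 else 0) = 0" if q: "q < p" for q
  proof -
    have "((\<lambda>t. Fma m chi alpha p (X(q := X q + t))) has_real_derivative
        Fma_deriv m chi alpha p X (\<lambda>i. if i = q then 1 else 0)) (at 0)"
      using X by (intro Fma_has_derivative_along[OF m]) (auto intro!: derivative_eq_intros)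
    moreover have "((\<lambda>t. Fma m chi alpha p (X(q := X q + t))) has_real_derivative 0) (at 0)"
      using c q unfolding critical_point_def by auto
    ultimately show ?thesis using DERIV_unique by blast
  qed
  then show ?thesis using Fma_deriv_coordinate_expansion[of m chi alpha p X v] by simp
qed

lemma le_if_DERIV_0_below_chord:
  fixes G :: "real \<Rightarrow> real"
  assumes d: "(G has_real_derivative 0) (at 0)"
    and chord: "\<And>t. 0 < t \<Longrightarrow> t < 1 \<Longrightarrow> G t \<le> (1-t) * G 0 + t * G 1"
  shows "G 0 \<le> G 1"
proof -
  have "((\<lambda>y. (G y - G 0) / (y - 0)) \<longlongrightarrow> 0) (at_right 0)"
    using has_field_derivative_at_within[OF d, of "{0<..}"] by (simp add: has_field_derivative_iff)
  moreover have "eventually (\<lambda>y. (G y - G 0) / (y - 0) \<le> G 1 - G 0) (at_right 0)"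
  proof (rule eventually_at_rightI[of 0 1])
    fix y :: real assume "y \<in> {0<..<1}"
    with chord[of y] have "G y - G 0 \<le> y * (G 1 - G 0)" by (auto simp: algebra_simps)
    with \<open>y \<in> {0<..<1}\<close> show "(G y - G 0) / (y - 0) \<le> G 1 - G 0" by (simp add: divide_le_eq mult.commute)
  qed simp
  ultimately have "0 \<le> G 1 - G 0" by (rule tendsto_upperbound) simp
  thus ?thesis by simp
qed

theorem critical_point_minimal:
  assumes m: "m > 1" and chi: "chi \<ge> 0" and alpha: "alpha \<ge> 0" and p: "p \<ge> 1"
    and c: "critical_point m chi alpha p X" and Y: "Y \<in> Rp p"
  shows "Fma m chi alpha p X \<le> Fma m chi alpha p Y"
proof -
  have X: "X \<in> Rp p" using c unfolding critical_point_def by simp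
  have k: "m - 1 > 0" using m by simp
  define g0 where "g0 = gap X"
  define g1 where "g1 = gap Y"
  have g0: "\<forall>l. Suc l < p \<longrightarrow> g0 l > 0" and g1: "\<forall>l. Suc l < p \<longrightarrow> g1 l > 0"
    unfolding g0_def g1_def using gap_pos[OF X] gap_pos[OF Y] by auto
  define x where "x = (\<lambda>t. of_gaps p (gap_path (m-1) t g0 g1))"
  have x0: "x 0 = X" and x1: "x 1 = Y"
    using of_gaps_cong[of p "gap_path (m-1) 0 g0 g1" g0] of_gaps_cong[of p "gap_path (m-1) 1 g0 g1" g1] g0 g1 k
    unfolding x_def g0_def g1_def of_gaps_gap[OF X] of_gaps_gap[OF Y] gap_path_def by auto
  define G where "G = (\<lambda>t. Fma m chi alpha p (x t))"
  have chord: "G t \<le> (1-t) * G 0 + t * G 1" if "0 < t" "t < 1" for t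
    using Fma_gap_path_le_chord[OF m g0 g1 _ _ p chi alpha, of t] that
    unfolding G_def x_def[symmetric] x0 x1 by (simp add: x_def g0_def g1_def of_gaps_gap X Y)
  define d where "d = (\<lambda>l. (-1/(m-1)) * (g0 l powr (-(m-1))) powr (-1/(m-1) - 1) * (g1 l powr (-(m-1)) - g0 l powr (-(m-1))))"
  have "((\<lambda>t. x t i) has_real_derivative of_gaps p d i) (at 0)" if i: "i < p" for i
  proof -
    have dl: "((\<lambda>t. gap_path (m-1) t g0 g1 l) has_real_derivative d l) (at 0)" if "Suc l < p" for l
      unfolding d_def gap_path_def using g0 that by (intro power_mean_has_derivative_0[OF k]) auto
    show ?thesis unfolding x_def of_gaps_def using i by (auto intro!: DERIV_diff DERIV_cdivide DERIV_sum dl)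
  qed
  then have "(G has_real_derivative Fma_deriv m chi alpha p X (of_gaps p d)) (at 0)"
    unfolding G_def using x0 by (intro Fma_has_derivative_along[OF m X]) auto
  then have "(G has_real_derivative 0) (at 0)" using critical_point_Fma_deriv[OF m c] by simp
  from le_if_DERIV_0_below_chord[OF this chord] show ?thesis unfolding G_def x0 x1 .
qed

section \<open>The ratio in the variables \<open>u = gap powr (1 - m)\<close>\<close>

text \<open>With \<open>k = m - 1\<close> and gaps \<open>u l powr (-1/k)\<close>, the adjacent energy becomes \<open>\<Sum>l. u l\<close> and the pair
  \<open>i < j\<close> contributes \<open>chain_weight k u i j\<close>. Extending the weight by \<open>0\<close> when some \<open>u l\<close> on the chain
  vanishes makes it continuous on the closed simplex.\<close>
definition chain_weight :: "real \<Rightarrow> (nat \<Rightarrow> real) \<Rightarrow> nat \<Rightarrow> nat \<Rightarrow> real" where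
  "chain_weight k u i j =
     (if \<forall>l\<in>{i..<j}. 0 < u l then (\<Sum>l\<in>{i..<j}. u l powr (-1/k)) powr (-k) else 0)"

definition chain_sum :: "real \<Rightarrow> nat \<Rightarrow> (nat \<Rightarrow> real) \<Rightarrow> real" where
  "chain_sum k p u = (\<Sum>i<p. \<Sum>j\<in>{i<..<p}. chain_weight k u i j)"

lemma chain_weight_nonneg: "chain_weight k u i j \<ge> 0"
  unfolding chain_weight_def by simp

lemma chain_weight_le:
  assumes k: "k > 0" and l: "i \<le> l" "l < j" and pos: "\<forall>q\<in>{i..<j}. 0 < u q"
  shows "chain_weight k u i j \<le> u l"
proof -
  have ul: "u l > 0" using pos l by auto
  have "u l powr (-1/k) \<le> (\<Sum>q\<in>{i..<j}. u q powr (-1/k))"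
    using l by (intro member_le_sum) auto
  hence "(\<Sum>q\<in>{i..<j}. u q powr (-1/k)) powr (-k) \<le> (u l powr (-1/k)) powr (-k)"
    using ul k by (intro powr_mono2') auto
  also have "\<dots> = u l" using ul k by (simp add: powr_powr)
  finally show ?thesis unfolding chain_weight_def using pos by simp
qed

lemma chain_weight_scale:
  assumes k: "k > 0" and c: "c > 0"
  shows "chain_weight k (\<lambda>l. c * u l) i j = c * chain_weight k u i j"
proof (cases "\<forall>l\<in>{i..<j}. 0 < u l")
  case True
  have "(\<Sum>l\<in>{i..<j}. (c * u l) powr (-1/k)) = c powr (-1/k) * (\<Sum>l\<in>{i..<j}. u l powr (-1/k))"
    unfolding sum_distrib_left using True c by (intro sum.cong refl) (simp add: powr_mult)
  hence "(\<Sum>l\<in>{i..<j}. (c * u l) powr (-1/k)) powr (-k)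
      = (c powr (-1/k)) powr (-k) * (\<Sum>l\<in>{i..<j}. u l powr (-1/k)) powr (-k)"
    using c by (simp add: powr_mult sum_nonneg)
  also have "(c powr (-1/k)) powr (-k) = c" using c k by (simp add: powr_powr)
  finally show ?thesis unfolding chain_weight_def using True c by simp
next
  case False
  moreover have "\<not> (\<forall>l\<in>{i..<j}. 0 < c * u l)" using False c by (simp add: zero_less_mult_iff)
  ultimately show ?thesis unfolding chain_weight_def by (simp only: if_False mult_zero_right)
qed

lemma chain_sum_scale: "k > 0 \<Longrightarrow> c > 0 \<Longrightarrow> chain_sum k p (\<lambda>l. c * u l) = c * chain_sum k p u"
  unfolding chain_sum_def by (simp add: chain_weight_scale sum_distrib_left)

lemma sum_off_diagonal_symmetric:
  fixes f :: "nat \<Rightarrow> nat \<Rightarrow> real"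
  assumes sym: "\<And>i j. f i j = f j i"
  shows "(\<Sum>i<p. \<Sum>j\<in>{..<p}-{i}. f i j) = 2 * (\<Sum>i<p. \<Sum>j\<in>{i<..<p}. f i j)"
proof -
  have "(\<Sum>j\<in>{..<p}-{i}. f i j) = (\<Sum>j<i. f i j) + (\<Sum>j\<in>{i<..<p}. f i j)" if "i < p" for i
  proof -
    have "{..<p}-{i} = {..<i} \<union> {i<..<p}" using that by auto
    moreover have "{..<i} \<inter> {i<..<p} = {}" by auto
    ultimately show ?thesis by (simp add: sum.union_disjoint)
  qed
  hence "(\<Sum>i<p. \<Sum>j\<in>{..<p}-{i}. f i j) = (\<Sum>i<p. \<Sum>j<i. f i j) + (\<Sum>i<p. \<Sum>j\<in>{i<..<p}. f i j)"
    by (simp add: sum.distrib[symmetric])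
  also have "(\<Sum>i<p. \<Sum>j<i. f i j) = (\<Sum>i<p. \<Sum>j | j \<in> {..<p} \<and> j < i. f i j)"
    by (intro sum.cong) auto
  also have "\<dots> = (\<Sum>j<p. \<Sum>i | i \<in> {..<p} \<and> j < i. f i j)"
    by (rule sum.swap_restrict) auto
  also have "\<dots> = (\<Sum>j<p. \<Sum>i\<in>{j<..<p}. f i j)"
    by (intro sum.cong) auto
  finally show ?thesis using sym by simp
qed

lemma ratio_of_gaps_chain_sum:
  assumes m: "m > 1" and u: "\<forall>l. Suc l < p \<longrightarrow> u l > 0"
  shows "ratio m p (of_gaps p (\<lambda>l. u l powr (-1/(m-1)))) = 2 * chain_sum (m-1) p u / (\<Sum>l<p-1. u l)"
proof -
  define g where "g = (\<lambda>l. u l powr (-1/(m-1)))"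
  have g: "\<forall>l. Suc l < p \<longrightarrow> g l > 0" unfolding g_def using u by auto
  have "g l powr (1-m) = u l" if "Suc l < p" for l
  proof -
    have "u l > 0" using u that by blast
    have "g l powr (1-m) = u l powr ((-1/(m-1)) * (1-m))" unfolding g_def by (rule powr_powr)
    also have "(-1/(m-1)) * (1-m) = 1" using m by (simp add: field_simps)
    finally show ?thesis using \<open>u l > 0\<close> by simp
  qed
  hence "adjacent_energy m p g = (\<Sum>l<p-1. u l)"
    unfolding adjacent_energy_def by (intro sum.cong) (auto simp: less_diff_conv)
  moreover have "gap_sum g i j powr (1-m) = chain_weight (m-1) u i j" if "i < j" "j < p" for i j
    using u that unfolding gap_sum_def g_def chain_weight_def by auto
  hence "pair_energy m p g = 2 * chain_sum (m-1) p u"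
    unfolding pair_energy_def chain_sum_def
    by (subst sum_off_diagonal_symmetric) (auto simp: gap_sum_commute intro!: sum.cong)
  ultimately show ?thesis using ratio_of_gaps[OF g] unfolding g_def by simp
qed

lemma ratio_eq_chain_sum:
  assumes m: "m > 1" and X: "X \<in> Rp p"
  shows "ratio m p X = 2 * chain_sum (m-1) p (\<lambda>l. gap X l powr (1-m)) / (\<Sum>l<p-1. gap X l powr (1-m))"
proof -
  have "(1-m) * (-1/(m-1)) = 1" using m by (simp add: field_simps)
  hence "of_gaps p (\<lambda>l. (gap X l powr (1-m)) powr (-1/(m-1))) = of_gaps p (gap X)"
    using gap_pos[OF X] by (intro of_gaps_cong) (auto simp: powr_powr less_imp_le)
  moreover have "\<forall>l. Suc l < p \<longrightarrow> gap X l powr (1-m) > 0" using gap_pos[OF X] by force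
  ultimately show ?thesis using ratio_of_gaps_chain_sum[OF m, of p "\<lambda>l. gap X l powr (1-m)"]
    unfolding of_gaps_gap[OF X] by simp
qed

lemma chain_sum_le_if_chains_short:
  assumes k: "k > 0" and u: "\<forall>l<n. u l \<ge> 0"
    and short: "\<And>i j. i < j \<Longrightarrow> j \<le> n \<Longrightarrow> chain_weight k u i j \<noteq> 0 \<Longrightarrow> j \<le> i + L"
  shows "chain_sum k (Suc n) u \<le> real L * (\<Sum>l<n. u l)"
proof -
  have row: "(\<Sum>j\<in>{i<..<Suc n}. chain_weight k u i j) \<le> real L * u i" if i: "i < n" for i
  proof -
    have "chain_weight k u i j \<le> (if j \<le> i + L then u i else 0)" if j: "j \<in> {i<..<Suc n}" for j
    proof (cases "chain_weight k u i j = 0")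
      case False
      hence "\<forall>q\<in>{i..<j}. 0 < u q" unfolding chain_weight_def by (auto split: if_splits)
      then show ?thesis using short[of i j] chain_weight_le[OF k, of i i j] j False by simp
    qed (use u i in simp)
    hence "(\<Sum>j\<in>{i<..<Suc n}. chain_weight k u i j) \<le> (\<Sum>j\<in>{i<..<Suc n}. if j \<le> i + L then u i else 0)"
      by (intro sum_mono)
    also have "\<dots> = real (card {j\<in>{i<..<Suc n}. j \<le> i + L}) * u i"
      by (simp add: sum.inter_filter[symmetric])
    also have "\<dots> \<le> real L * u i"
    proof (rule mult_right_mono)
      have "card {j\<in>{i<..<Suc n}. j \<le> i + L} \<le> card {i<..i+L}" by (intro card_mono) auto
      thus "real (card {j\<in>{i<..<Suc n}. j \<le> i + L}) \<le> real L" by simp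
    qed (use u i in auto)
    finally show ?thesis .
  qed
  have "{n<..<Suc n} = {}" by auto
  hence "chain_sum k (Suc n) u = (\<Sum>i<n. \<Sum>j\<in>{i<..<Suc n}. chain_weight k u i j)"
    unfolding chain_sum_def by simp
  also have "\<dots> \<le> (\<Sum>i<n. real L * u i)" using row by (intro sum_mono) auto
  finally show ?thesis by (simp add: sum_distrib_left)
qed

section \<open>Vanishing weights can be made positive without lowering the ratio\<close>

lemma sum_fun_upd:
  fixes w :: "'a \<Rightarrow> 'b::ab_group_add"
  shows "finite A \<Longrightarrow> l \<in> A \<Longrightarrow> sum (w(l := e)) A = sum w A - w l + e"
  by (simp add: sum.remove[of A l] sum.cong[of "A - {l}" _ "w(l := e)" w])

lemma chain_weight_fun_upd:
  assumes k: "k > 0" and e: "e > 0" and l: "i \<le> l" "l < j"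
    and pos: "\<forall>q\<in>{i..<j}. q \<noteq> l \<longrightarrow> w q > 0"
  shows "chain_weight k (w(l := e)) i j = e * (1 + (\<Sum>q\<in>{i..<j}-{l}. w q powr (-1/k)) * e powr (1/k)) powr (-k)"
proof -
  define B where "B = (\<Sum>q\<in>{i..<j}-{l}. w q powr (-1/k))"
  have B: "B \<ge> 0" unfolding B_def by (intro sum_nonneg) auto
  have "(\<Sum>q\<in>{i..<j}. (w(l := e)) q powr (-1/k)) = e powr (-1/k) + B"
    using l unfolding B_def by (subst sum.remove[of _ l]) (auto intro!: sum.cong)
  also have "\<dots> = e powr (-1/k) * (1 + B * e powr (1/k))"
    using e by (simp add: algebra_simps powr_add[symmetric])
  finally have "(\<Sum>q\<in>{i..<j}. (w(l := e)) q powr (-1/k)) powr (-k)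
      = (e powr (-1/k)) powr (-k) * (1 + B * e powr (1/k)) powr (-k)"
    using B e by (simp add: powr_mult add_pos_nonneg)
  also have "(e powr (-1/k)) powr (-k) = e" using e k by (simp add: powr_powr)
  finally show ?thesis unfolding chain_weight_def B_def[symmetric] using pos e by simp
qed

lemma eventually_chain_weight_fun_upd_gt:
  assumes k: "k > 0" and c: "c < 1" and l: "i \<le> l" "l < j"
    and pos: "\<forall>q\<in>{i..<j}. q \<noteq> l \<longrightarrow> w q > 0"
  shows "eventually (\<lambda>e. e > 0 \<and> chain_weight k (w(l := e)) i j > c * e) (at_right 0)"
proof -
  define B where "B = (\<Sum>q\<in>{i..<j}-{l}. w q powr (-1/k))"
  have "((\<lambda>e::real. e powr (1/k)) \<longlongrightarrow> 0) (at_right 0)"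
    using k by (intro tendsto_zero_powrI[where b="1/k"] tendsto_ident_at tendsto_const)
      (auto simp: eventually_at_filter)
  hence "((\<lambda>e. (1 + B * e powr (1/k)) powr (-k)) \<longlongrightarrow> (1 + B * 0) powr (-k)) (at_right 0)"
    by (intro tendsto_intros) (auto simp: B_def intro!: sum_nonneg)
  hence "eventually (\<lambda>e. (1 + B * e powr (1/k)) powr (-k) > c) (at_right 0)"
    using c by (intro order_tendstoD(1)) auto
  moreover have "eventually (\<lambda>e::real. e > 0) (at_right 0)" by (simp add: eventually_at_filter)
  ultimately show ?thesis
    by eventually_elim (auto simp: chain_weight_fun_upd[OF k _ l pos] B_def)
qed

lemma chain_sum_fun_upd_ge:
  assumes wl: "w l = 0" and A: "A \<subseteq> Sigma {..<p} (\<lambda>i. {i<..<p})" and Al: "\<forall>(i,j)\<in>A. i \<le> l \<and> l < j"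
  shows "chain_sum k p w + (\<Sum>(i,j)\<in>A. chain_weight k (w(l := e)) i j) \<le> chain_sum k p (w(l := e))"
proof -
  define S where "S = Sigma {..<p} (\<lambda>i. {i<..<p})"
  define T where "T = (\<lambda>u ij. chain_weight k u (fst ij) (snd ij))"
  have fS: "finite S" unfolding S_def by auto
  have sum_S: "chain_sum k p u = (\<Sum>ij\<in>S. T u ij)" for u
    unfolding chain_sum_def S_def T_def by (subst sum.Sigma) (auto simp: case_prod_beta)
  have "T w ij + (if ij \<in> A then T (w(l := e)) ij else 0) \<le> T (w(l := e)) ij" for ij
  proof (cases "l \<in> {fst ij..<snd ij}")
    case True
    hence "\<not> (\<forall>q\<in>{fst ij..<snd ij}. 0 < w q)" using wl by force
    hence "T w ij = 0" unfolding T_def chain_weight_def by (rule if_not_P)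
    then show ?thesis using chain_weight_nonneg[of k "w(l := e)"] by (simp add: T_def)
  next
    case False
    hence "ij \<notin> A" using Al by auto
    moreover have "T (w(l := e)) ij = T w ij"
    proof -
      have "\<forall>q\<in>{fst ij..<snd ij}. (w(l := e)) q = w q" using False by auto
      hence "(\<forall>q\<in>{fst ij..<snd ij}. 0 < (w(l := e)) q) = (\<forall>q\<in>{fst ij..<snd ij}. 0 < w q)"
        and "(\<Sum>q\<in>{fst ij..<snd ij}. (w(l := e)) q powr (-1/k)) = (\<Sum>q\<in>{fst ij..<snd ij}. w q powr (-1/k))"
        by (auto intro: sum.cong)
      then show ?thesis unfolding T_def chain_weight_def by simp
    qed
    ultimately show ?thesis by simp
  qed
  hence "(\<Sum>ij\<in>S. T w ij + (if ij \<in> A then T (w(l := e)) ij else 0)) \<le> chain_sum k p (w(l := e))"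
    unfolding sum_S by (intro sum_mono)
  moreover have "(\<Sum>ij\<in>A. T (w(l := e)) ij) = (\<Sum>ij\<in>S. if ij \<in> A then T (w(l := e)) ij else 0)"
    using sum.inter_restrict[OF fS, of "T (w(l := e))" A] A unfolding S_def by (simp add: Int_absorb1)
  ultimately show ?thesis unfolding sum_S by (simp add: sum.distrib T_def case_prod_beta)
qed

text \<open>The new weight \<open>e\<close> adds \<open>e\<close> to the denominator but more than \<open>L \<cdot> e\<close> to the numerator, while
  the old ratio is at most \<open>L\<close>.\<close>
lemma chain_ratio_le_fun_upd:
  assumes k: "k > 0" and P: "(\<Sum>q<n. w q) > 0" and l: "l < n" and wl: "w l = 0"
    and bound: "chain_sum k (Suc n) w \<le> real L * (\<Sum>q<n. w q)"
    and A: "A \<subseteq> Sigma {..<Suc n} (\<lambda>i. {i<..<Suc n})" and card: "card A \<ge> L + 1"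
    and Al: "\<forall>(i,j)\<in>A. i \<le> l \<and> l < j \<and> (\<forall>q\<in>{i..<j}. q \<noteq> l \<longrightarrow> w q > 0)"
  shows "\<exists>e>0. chain_sum k (Suc n) w / (\<Sum>q<n. w q)
    \<le> chain_sum k (Suc n) (w(l := e)) / (\<Sum>q<n. (w(l := e)) q)"
proof -
  have fA: "finite A" using A by (rule finite_subset) auto
  define c where "c = real L / (real L + 1)"
  have "c < 1" unfolding c_def by simp
  hence "\<forall>(i,j)\<in>A. eventually (\<lambda>e. e > 0 \<and> chain_weight k (w(l := e)) i j > c * e) (at_right 0)"
    using Al by (auto intro!: eventually_chain_weight_fun_upd_gt[OF k])
  hence "eventually (\<lambda>e. \<forall>(i,j)\<in>A. e > 0 \<and> chain_weight k (w(l := e)) i j > c * e) (at_right 0)"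
    using eventually_ball_finite[OF fA] by (simp add: case_prod_beta)
  moreover have "eventually (\<lambda>e::real. e > 0) (at_right 0)" by (simp add: eventually_at_filter)
  ultimately obtain e where e: "e > 0" and big: "\<forall>(i,j)\<in>A. chain_weight k (w(l := e)) i j > c * e"
    using eventually_happens'[OF trivial_limit_at_right_real, OF eventually_conj] by blast
  define N where "N = chain_sum k (Suc n) w"
  define P where "P = (\<Sum>q<n. w q)"
  have "real L * e = (real L + 1) * (c * e)" unfolding c_def by (simp add: field_simps)
  also have "\<dots> \<le> real (card A) * (c * e)"
    using card e by (intro mult_right_mono) (auto simp: c_def)
  also have "\<dots> = (\<Sum>ij\<in>A. c * e)" by simp
  also have "\<dots> \<le> (\<Sum>(i,j)\<in>A. chain_weight k (w(l := e)) i j)"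
    using big by (intro sum_mono) (auto simp: less_imp_le)
  finally have M: "N + real L * e \<le> chain_sum k (Suc n) (w(l := e))"
    using chain_sum_fun_upd_ge[where w = w and l = l and A = A and p = "Suc n" and k = k and e = e, OF wl A] Al
    unfolding N_def by fastforce
  have "N / P \<le> (N + real L * e) / (P + e)"
    using bound P e unfolding N_def[symmetric] P_def[symmetric] by (simp add: field_simps)
  also have "\<dots> \<le> chain_sum k (Suc n) (w(l := e)) / (P + e)"
    using M P e unfolding P_def by (intro divide_right_mono) auto
  also have "P + e = (\<Sum>q<n. (w(l := e)) q)" using sum_fun_upd[of "{..<n}" l w e] l wl P_def by simp
  finally show ?thesis using e unfolding N_def P_def by blast
qed

lemma maximal_positive_run:
  fixes w :: "nat \<Rightarrow> real"
  obtains i0 L where "i0 + L \<le> n" "\<forall>q\<in>{i0..<i0+L}. 0 < w q"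
    "\<And>i L'. i + L' \<le> n \<Longrightarrow> \<forall>q\<in>{i..<i+L'}. 0 < w q \<Longrightarrow> L' \<le> L"
proof -
  define R where "R = {L. \<exists>i. i + L \<le> n \<and> (\<forall>q\<in>{i..<i+L}. 0 < w q)}"
  have "finite R" by (rule finite_subset[of _ "{..n}"]) (auto simp: R_def)
  moreover have "0 \<in> R" unfolding R_def by auto
  ultimately have "Max R \<in> R" and "\<And>L'. L' \<in> R \<Longrightarrow> L' \<le> Max R" by (auto intro: Max_in)
  then show ?thesis using that unfolding R_def by blast
qed

text \<open>The weight next to a longest run of positive weights vanishes and lies on one more chain than the
  run is long, while every chain of positive weight is at most that long.\<close>
lemma chain_ratio_le_fill_zero:
  assumes k: "k > 0" and w0: "\<forall>q<n. w q \<ge> 0" and P: "(\<Sum>q<n. w q) > 0" and z: "l0 < n" "w l0 = 0"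
  shows "\<exists>l<n. w l = 0 \<and> (\<exists>e>0. chain_sum k (Suc n) w / (\<Sum>q<n. w q)
           \<le> chain_sum k (Suc n) (w(l := e)) / (\<Sum>q<n. (w(l := e)) q))"
proof -
  obtain i0 L where run: "i0 + L \<le> n" "\<forall>q\<in>{i0..<i0+L}. 0 < w q"
    and longest: "\<And>i L'. i + L' \<le> n \<Longrightarrow> \<forall>q\<in>{i..<i+L'}. 0 < w q \<Longrightarrow> L' \<le> L"
    using maximal_positive_run[where n = n and w = w] by blast
  have "chain_weight k w i j \<noteq> 0 \<Longrightarrow> j \<le> i + L" if "i < j" "j \<le> n" for i j
    using longest[of i "j - i"] that unfolding chain_weight_def by (auto split: if_splits)
  hence bound: "chain_sum k (Suc n) w \<le> real L * (\<Sum>q<n. w q)"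
    by (rule chain_sum_le_if_chains_short[OF k w0])
  have zero: "w l = 0"
    if "i + Suc L \<le> n" "l \<in> {i..<i + Suc L}" "\<forall>q\<in>{i..<i + Suc L}. q \<noteq> l \<longrightarrow> 0 < w q" for i l
  proof (rule ccontr)
    assume "w l \<noteq> 0"
    with w0 that(1,2) have "0 < w l" by (simp add: less_le)
    with that(3) have "\<forall>q\<in>{i..<i + Suc L}. 0 < w q" by metis
    with longest[OF that(1)] show False by simp
  qed
  show ?thesis
  proof (cases "i0 + L < n")
    case True
    define l where "l = i0 + L"
    have wl: "w l = 0" using zero[of i0 l] run True unfolding l_def by auto
    define A where "A = (\<lambda>i. (i, Suc l)) ` {i0..l}"
    have card: "card A \<ge> L + 1" unfolding A_def by (subst card_image) (auto simp: inj_on_def l_def)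
    have A: "A \<subseteq> Sigma {..<Suc n} (\<lambda>i. {i<..<Suc n})" using True unfolding A_def l_def by auto
    have Al: "\<forall>(i,j)\<in>A. i \<le> l \<and> l < j \<and> (\<forall>q\<in>{i..<j}. q \<noteq> l \<longrightarrow> w q > 0)"
      using run unfolding A_def l_def by auto
    have ln: "l < n" using True unfolding l_def .
    show ?thesis using chain_ratio_le_fun_upd[OF k P ln wl bound A card Al] ln wl by blast
  next
    case False
    have "i0 > 0"
    proof (rule ccontr)
      assume "\<not> i0 > 0"
      with False run have "l0 \<in> {i0..<i0+L}" using z by auto
      with run(2) z(2) show False by fastforce
    qed
    define l where "l = i0 - 1"
    have "\<forall>q\<in>{l..<l + Suc L}. q \<noteq> l \<longrightarrow> 0 < w q"
    proof (intro ballI impI)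
      fix q assume "q \<in> {l..<l + Suc L}" "q \<noteq> l"
      hence "q \<in> {i0..<i0+L}" using \<open>i0 > 0\<close> unfolding l_def by auto
      thus "0 < w q" using run(2) by blast
    qed
    hence wl: "w l = 0" using zero[of l l] run False \<open>i0 > 0\<close> unfolding l_def by simp
    define A where "A = (\<lambda>j. (l, j)) ` {Suc l..n}"
    have card: "card A \<ge> L + 1" unfolding A_def using False run \<open>i0 > 0\<close>
      by (subst card_image) (auto simp: inj_on_def l_def)
    have A: "A \<subseteq> Sigma {..<Suc n} (\<lambda>i. {i<..<Suc n})" using run \<open>i0 > 0\<close> unfolding A_def l_def by auto
    have Al: "\<forall>(i,j)\<in>A. i \<le> l \<and> l < j \<and> (\<forall>q\<in>{i..<j}. q \<noteq> l \<longrightarrow> w q > 0)"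
      using run False \<open>i0 > 0\<close> unfolding A_def l_def by auto
    have ln: "l < n" using run \<open>i0 > 0\<close> unfolding l_def by simp
    show ?thesis using chain_ratio_le_fun_upd[OF k P ln wl bound A card Al] ln wl by blast
  qed
qed

lemma chain_ratio_le_positive:
  assumes k: "k > 0" and w0: "\<forall>q<n. w q \<ge> 0" and P: "(\<Sum>q<n. w q) > 0"
  shows "\<exists>v. (\<forall>q<n. v q > 0) \<and>
    chain_sum k (Suc n) w / (\<Sum>q<n. w q) \<le> chain_sum k (Suc n) v / (\<Sum>q<n. v q)"
  using w0 P
proof (induction "card {q\<in>{..<n}. w q = 0}" arbitrary: w rule: less_induct)
  case less
  show ?case
  proof (cases "\<exists>l0<n. w l0 = 0")
    case False
    hence "\<forall>q<n. w q > 0" using less.prems(1) by (auto simp: less_le)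
    then show ?thesis by blast
  next
    case True
    then obtain l0 where "l0 < n" "w l0 = 0" by blast
    with chain_ratio_le_fill_zero[OF k less.prems] obtain l e where l: "l < n" "w l = 0" and e: "e > 0"
      and le: "chain_sum k (Suc n) w / (\<Sum>q<n. w q) \<le> chain_sum k (Suc n) (w(l := e)) / (\<Sum>q<n. (w(l := e)) q)"
      by blast
    have "{q\<in>{..<n}. (w(l := e)) q = 0} = {q\<in>{..<n}. w q = 0} - {l}" using e by auto
    moreover have "card ({q\<in>{..<n}. w q = 0} - {l}) < card {q\<in>{..<n}. w q = 0}"
      using l by (intro card_Diff1_less) auto
    ultimately have "card {q\<in>{..<n}. (w(l := e)) q = 0} < card {q\<in>{..<n}. w q = 0}" by simp
    moreover have "\<forall>q<n. (w(l := e)) q \<ge> 0" using less.prems(1) e by simp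
    moreover have "(\<Sum>q<n. (w(l := e)) q) > 0"
      using sum_fun_upd[of "{..<n}" l w e] l e less.prems(2) by simp
    ultimately obtain v where "\<forall>q<n. v q > 0"
      "chain_sum k (Suc n) (w(l := e)) / (\<Sum>q<n. (w(l := e)) q) \<le> chain_sum k (Suc n) v / (\<Sum>q<n. v q)"
      using less.hyps by blast
    with le show ?thesis by (blast intro: order.trans)
  qed
qed

section \<open>The supremum defining \<open>Cp\<close> is attained\<close>

lemma convergent_subseq_bounded_coordinates:
  fixes f :: "nat \<Rightarrow> nat \<Rightarrow> real"
  assumes bounded: "\<forall>q l. \<bar>f q l\<bar> \<le> K"
  shows "\<exists>r. strict_mono r \<and> (\<forall>l<n. convergent (\<lambda>q. f (r q) l))"
proof (induction n)
  case 0
  have "strict_mono (id :: nat \<Rightarrow> nat)" by (simp add: strict_mono_def)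
  then show ?case by blast
next
  case (Suc n)
  then obtain r where r: "strict_mono r" "\<forall>l<n. convergent (\<lambda>q. f (r q) l)" by blast
  obtain r2 where r2: "strict_mono r2" "monoseq (\<lambda>q. f (r (r2 q)) n)"
    using seq_monosub[of "\<lambda>q. f (r q) n"] by blast
  have "Bseq (\<lambda>q. f (r (r2 q)) n)" using bounded by (intro BseqI'[of _ K]) simp
  hence "convergent (\<lambda>q. f (r (r2 q)) n)" using r2(2) by (rule Bseq_monoseq_convergent)
  moreover have "convergent (\<lambda>q. f (r (r2 q)) l)" if "l < n" for l
    using r(2) that convergent_subseq_convergent[OF _ r2(1), of "\<lambda>q. f (r q) l"] by (simp add: o_def)
  ultimately have "\<forall>l<Suc n. convergent (\<lambda>q. f ((r \<circ> r2) q) l)" by (auto simp: less_Suc_eq)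
  then show ?case using strict_mono_o[OF r(1) r2(1)] by blast
qed

lemma chain_weight_tendsto:
  fixes w :: "nat \<Rightarrow> nat \<Rightarrow> real"
  assumes k: "k > 0" and ij: "i < j"
    and pos: "\<forall>q. \<forall>l\<in>{i..<j}. w q l > 0"
    and lim: "\<forall>l\<in>{i..<j}. (\<lambda>q. w q l) \<longlonglongrightarrow> w' l" and nonneg: "\<forall>l\<in>{i..<j}. w' l \<ge> 0"
  shows "(\<lambda>q. chain_weight k (w q) i j) \<longlonglongrightarrow> chain_weight k w' i j"
proof (cases "\<forall>l\<in>{i..<j}. 0 < w' l")
  case True
  have "(\<Sum>l\<in>{i..<j}. w' l powr (-1/k)) > 0"
    using True ij by (intro sum_pos) (simp_all add: less_imp_neq[symmetric])
  moreover have "(\<lambda>q. \<Sum>l\<in>{i..<j}. w q l powr (-1/k)) \<longlonglongrightarrow> (\<Sum>l\<in>{i..<j}. w' l powr (-1/k))"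
  proof (intro tendsto_sum)
    fix l assume l: "l \<in> {i..<j}"
    with True have "w' l \<noteq> 0" by (metis less_irrefl)
    with l lim show "(\<lambda>q. w q l powr (-1/k)) \<longlonglongrightarrow> w' l powr (-1/k)"
      by (intro tendsto_powr tendsto_const) auto
  qed
  ultimately have "(\<lambda>q. (\<Sum>l\<in>{i..<j}. w q l powr (-1/k)) powr (-k))
      \<longlonglongrightarrow> (\<Sum>l\<in>{i..<j}. w' l powr (-1/k)) powr (-k)"
    by (auto intro: tendsto_powr)
  then show ?thesis unfolding chain_weight_def using pos True by simp
next
  case False
  then obtain l0 where l0: "l0 \<in> {i..<j}" "\<not> 0 < w' l0" by blast
  hence "w' l0 = 0" using nonneg by (metis order.not_eq_order_implies_strict)
  have le: "chain_weight k (w q) i j \<le> w q l0" for q using l0 pos by (intro chain_weight_le[OF k]) auto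
  have lim0: "(\<lambda>q. w q l0) \<longlonglongrightarrow> 0" using lim l0 \<open>w' l0 = 0\<close> by metis
  have "(\<lambda>q. chain_weight k (w q) i j) \<longlonglongrightarrow> 0"
    by (rule tendsto_sandwich[where f = "\<lambda>_. 0" and h = "\<lambda>q. w q l0", OF _ _ tendsto_const lim0])
      (simp_all add: chain_weight_nonneg le)
  moreover have "chain_weight k w' i j = 0" unfolding chain_weight_def using False by (rule if_not_P)
  ultimately show ?thesis by simp
qed

lemma sum_lessThan_pos:
  assumes "(n::nat) \<ge> 1" "\<forall>l<n. u l > 0"
  shows "(\<Sum>l<n. u l :: real) > 0"
proof -
  have "0 \<in> {..<n}" using assms(1) by simp
  with assms(2) show ?thesis by (intro sum_pos) auto
qed

lemma ratio_le:
  assumes m: "m > 1" and X: "X \<in> Rp (Suc n)" and n: "n \<ge> 1"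
  shows "ratio m (Suc n) X \<le> 2 * real n"
proof -
  define u where "u = (\<lambda>l. gap X l powr (1-m))"
  have u: "\<forall>l<n. u l > 0" unfolding u_def using gap_pos[OF X] by force
  hence "(\<Sum>l<n. u l) > 0" using n by (intro sum_lessThan_pos)
  moreover have "chain_sum (m-1) (Suc n) u \<le> real n * (\<Sum>l<n. u l)"
    using u m by (intro chain_sum_le_if_chains_short) (auto simp: less_imp_le)
  ultimately show ?thesis using ratio_eq_chain_sum[OF m X] unfolding u_def by (simp add: divide_le_eq)
qed

lemma ratio_normalised_chain_sum:
  assumes m: "m > 1" and X: "X \<in> Rp (Suc n)" and n: "n \<ge> 1"
  obtains u where "\<forall>l<n. 0 < u l \<and> u l \<le> 1" "(\<Sum>l<n. u l) = 1"
    "ratio m (Suc n) X = 2 * chain_sum (m-1) (Suc n) u"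
proof -
  define w where "w = (\<lambda>l. gap X l powr (1-m))"
  define P where "P = (\<Sum>l<n. w l)"
  have w: "\<forall>l<n. w l > 0" unfolding w_def using gap_pos[OF X] by force
  hence P: "P > 0" unfolding P_def using n by (intro sum_lessThan_pos)
  have "w l \<le> P" if "l < n" for l unfolding P_def using w that by (intro member_le_sum) (auto simp: less_imp_le)
  hence "\<forall>l<n. 0 < w l / P \<and> w l / P \<le> 1" using w P by simp
  moreover have "(\<Sum>l<n. w l / P) = 1" using P unfolding P_def by (simp add: sum_divide_distrib[symmetric])
  moreover have "ratio m (Suc n) X = 2 * chain_sum (m-1) (Suc n) (\<lambda>l. (1/P) * w l)"
    using ratio_eq_chain_sum[OF m X] chain_sum_scale[of "m-1" "1/P"] m P
    unfolding w_def[symmetric] by (simp add: P_def)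
  ultimately show ?thesis using that by simp
qed

lemma ratio_of_positive_weights:
  assumes m: "m > 1" and v: "\<forall>l<n. v l > 0"
  shows "\<exists>X\<in>Rp (Suc n). ratio m (Suc n) X = 2 * chain_sum (m-1) (Suc n) v / (\<Sum>l<n. v l)"
proof
  have v': "\<forall>l. Suc l < Suc n \<longrightarrow> v l > 0" using v by simp
  show "of_gaps (Suc n) (\<lambda>l. v l powr (-1/(m-1))) \<in> Rp (Suc n)"
    using v by (intro of_gaps_in_Rp) auto
  show "ratio m (Suc n) (of_gaps (Suc n) (\<lambda>l. v l powr (-1/(m-1))))
      = 2 * chain_sum (m-1) (Suc n) v / (\<Sum>l<n. v l)"
    using ratio_of_gaps_chain_sum[OF m v'] by simp
qed

lemma chain_sum_limit_point:
  fixes u :: "nat \<Rightarrow> nat \<Rightarrow> real"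
  assumes k: "k > 0"
    and u: "\<And>q. \<forall>l<n. 0 < u q l \<and> u q l \<le> 1" and total: "\<And>q. (\<Sum>l<n. u q l) = 1"
  obtains r u' where "strict_mono r" "\<forall>l<n. u' l \<ge> 0" "(\<Sum>l<n. u' l) = 1"
    "(\<lambda>q. chain_sum k (Suc n) (u (r q))) \<longlonglongrightarrow> chain_sum k (Suc n) u'"
proof -
  have "\<forall>q l. \<bar>if l < n then u q l else 0\<bar> \<le> 1" using u by (simp add: less_imp_le)
  then obtain r where r: "strict_mono r" and conv: "\<forall>l<n. convergent (\<lambda>q. if l < n then u (r q) l else 0)"
    using convergent_subseq_bounded_coordinates[of "\<lambda>q l. if l < n then u q l else 0" 1 n] by blast
  define u' where "u' = (\<lambda>l. lim (\<lambda>q. u (r q) l))"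
  have lim: "(\<lambda>q. u (r q) l) \<longlonglongrightarrow> u' l" if "l < n" for l
    using conv that unfolding u'_def by (simp add: convergent_LIMSEQ_iff)
  have nonneg: "\<forall>l<n. u' l \<ge> 0"
  proof (intro allI impI)
    fix l assume "l < n"
    with u show "u' l \<ge> 0" by (intro LIMSEQ_le_const[OF lim]) (auto simp: less_imp_le)
  qed
  have "(\<lambda>q. \<Sum>l<n. u (r q) l) \<longlonglongrightarrow> (\<Sum>l<n. u' l)" using lim by (intro tendsto_sum) auto
  hence "(\<Sum>l<n. u' l) = 1" using total LIMSEQ_unique[OF _ tendsto_const] by simp
  moreover have "(\<lambda>q. chain_sum k (Suc n) (u (r q))) \<longlonglongrightarrow> chain_sum k (Suc n) u'"
    unfolding chain_sum_def
  proof (intro tendsto_sum)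
    fix i j assume "i \<in> {..<Suc n}" "j \<in> {i<..<Suc n}"
    then show "(\<lambda>q. chain_weight k (u (r q)) i j) \<longlonglongrightarrow> chain_weight k u' i j"
      using u lim nonneg by (intro chain_weight_tendsto[OF k]) auto
  qed
  ultimately show ?thesis using that r nonneg by blast
qed

lemma tendsto_cSUP_sequence:
  fixes f :: "'a \<Rightarrow> real"
  assumes S: "S \<noteq> {}" and bdd: "bdd_above (f ` S)"
  obtains X where "\<And>q. X q \<in> S" "(\<lambda>q. f (X q)) \<longlonglongrightarrow> (SUP x\<in>S. f x)"
proof -
  define s where "s = (SUP x\<in>S. f x)"
  have "\<exists>x\<in>S. s - inverse (real (Suc q)) < f x" for q
    using less_cSUP_iff[OF S bdd, of "s - inverse (real (Suc q))"] unfolding s_def[symmetric] by simp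
  then obtain X where X: "\<And>q. X q \<in> S" "\<And>q. s - inverse (real (Suc q)) < f (X q)" by metis
  have "(\<lambda>q. f (X q)) \<longlonglongrightarrow> s"
  proof (rule tendsto_sandwich[of "\<lambda>q. s - inverse (real (Suc q))" _ _ "\<lambda>q. s"])
    show "eventually (\<lambda>q. s - inverse (real (Suc q)) \<le> f (X q)) sequentially"
      using X(2) by (intro always_eventually) (simp add: less_imp_le)
    show "eventually (\<lambda>q. f (X q) \<le> s) sequentially"
      using X(1) bdd unfolding s_def by (intro always_eventually) (simp add: cSUP_upper)
    show "(\<lambda>q. s - inverse (real (Suc q))) \<longlonglongrightarrow> s"
      using LIMSEQ_inverse_real_of_nat tendsto_diff[OF tendsto_const] by fastforce
  qed simp
  with X(1) that show ?thesis unfolding s_def by blast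
qed

lemma bdd_above_ratio:
  assumes m: "m > 1" and n: "n \<ge> 1"
  shows "bdd_above (ratio m (Suc n) ` Rp (Suc n))"
  using ratio_le[OF m _ n] by (intro bdd_aboveI[of _ "2 * real n"]) auto

lemma Sup_ratio_eq_chain_sum:
  assumes m: "m > 1" and n: "n \<ge> 1"
  obtains u where "\<forall>l<n. u l \<ge> 0" "(\<Sum>l<n. u l) = 1"
    "(SUP X\<in>Rp (Suc n). ratio m (Suc n) X) = 2 * chain_sum (m-1) (Suc n) u"
proof -
  have k: "m - 1 > 0" using m by simp
  have "Rp (Suc n) \<noteq> {}" using of_gaps_in_Rp[of "Suc n" "\<lambda>_. 1"] by auto
  then obtain Xs where Xs: "\<And>q. Xs q \<in> Rp (Suc n)"
    and lim_Xs: "(\<lambda>q. ratio m (Suc n) (Xs q)) \<longlonglongrightarrow> (SUP X\<in>Rp (Suc n). ratio m (Suc n) X)"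
    using tendsto_cSUP_sequence[OF _ bdd_above_ratio[OF m n]] by blast
  have "\<forall>q. \<exists>u. (\<forall>l<n. 0 < u l \<and> u l \<le> 1) \<and> (\<Sum>l<n. u l) = 1
      \<and> ratio m (Suc n) (Xs q) = 2 * chain_sum (m-1) (Suc n) u"
    using ratio_normalised_chain_sum[OF m Xs n] by blast
  then obtain u where "\<forall>q. (\<forall>l<n. 0 < u q l \<and> u q l \<le> 1) \<and> (\<Sum>l<n. u q l) = 1
      \<and> ratio m (Suc n) (Xs q) = 2 * chain_sum (m-1) (Suc n) (u q)"
    by (metis choice)
  hence u: "\<And>q. \<forall>l<n. 0 < u q l \<and> u q l \<le> 1" "\<And>q. (\<Sum>l<n. u q l) = 1"
    and ratio_u: "\<And>q. ratio m (Suc n) (Xs q) = 2 * chain_sum (m-1) (Suc n) (u q)"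
    by simp_all
  obtain r u' where r: "strict_mono r" and u': "\<forall>l<n. u' l \<ge> 0" "(\<Sum>l<n. u' l) = 1"
    and lim: "(\<lambda>q. chain_sum (m-1) (Suc n) (u (r q))) \<longlonglongrightarrow> chain_sum (m-1) (Suc n) u'"
    by (rule chain_sum_limit_point[OF k u])
  have "(\<lambda>q. ratio m (Suc n) (Xs (r q))) \<longlonglongrightarrow> 2 * chain_sum (m-1) (Suc n) u'"
    unfolding ratio_u by (intro tendsto_intros lim)
  moreover have "(\<lambda>q. ratio m (Suc n) (Xs (r q))) \<longlonglongrightarrow> (SUP X\<in>Rp (Suc n). ratio m (Suc n) X)"
    using LIMSEQ_subseq_LIMSEQ[OF lim_Xs r] by (simp add: o_def)
  ultimately show ?thesis using that u' LIMSEQ_unique by metis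
qed

theorem ratio_Sup_attained:
  assumes m: "m > 1" and n: "n \<ge> 1"
  shows "\<exists>X\<in>Rp (Suc n). ratio m (Suc n) X = (SUP X\<in>Rp (Suc n). ratio m (Suc n) X)"
proof -
  define s where "s = (SUP X\<in>Rp (Suc n). ratio m (Suc n) X)"
  obtain u where u: "\<forall>l<n. u l \<ge> 0" "(\<Sum>l<n. u l) = 1" and s: "s = 2 * chain_sum (m-1) (Suc n) u"
    using Sup_ratio_eq_chain_sum[OF m n] unfolding s_def by blast
  obtain v where v: "\<forall>l<n. v l > 0"
    and "chain_sum (m-1) (Suc n) u / (\<Sum>l<n. u l) \<le> chain_sum (m-1) (Suc n) v / (\<Sum>l<n. v l)"
    using chain_ratio_le_positive[of "m-1" n u] m u by auto
  with s u(2) have "s \<le> 2 * chain_sum (m-1) (Suc n) v / (\<Sum>l<n. v l)" by simp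
  moreover obtain X where X: "X \<in> Rp (Suc n)"
    and "ratio m (Suc n) X = 2 * chain_sum (m-1) (Suc n) v / (\<Sum>l<n. v l)"
    using ratio_of_positive_weights[OF m v] by blast
  moreover have "ratio m (Suc n) X \<le> s"
    using X bdd_above_ratio[OF m n] unfolding s_def by (simp add: cSUP_upper)
  ultimately show ?thesis unfolding s_def by force
qed

section \<open>Minimisers at the critical value \<open>Cp\<close>\<close>

lemma Fm_gap:
  assumes Y: "Y \<in> Rp p" and p: "p \<ge> 1"
  shows "Fm m chi p Y = (adjacent_energy m p (gap Y) - chi * pair_energy m p (gap Y)) / (m-1)"
  using Fma_of_gaps[of p "gap Y" m chi 0] gap_pos[OF Y] p
  unfolding of_gaps_gap[OF Y] by (simp add: diff_divide_distrib)

lemma ratio_gap: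
  assumes Y: "Y \<in> Rp p"
  shows "ratio m p Y = pair_energy m p (gap Y) / adjacent_energy m p (gap Y)"
proof -
  have "\<forall>l. Suc l < p \<longrightarrow> gap Y l > 0" using gap_pos[OF Y] by blast
  from ratio_of_gaps[OF this, of m] show ?thesis unfolding of_gaps_gap[OF Y] .
qed

text \<open>Since \<open>1 / Cp\<close> bounds the ratio, \<open>Fm\<close> is non-negative at \<open>chi = Cp\<close> and vanishes exactly at the
  maximisers of the ratio; these exist, so the minimisers are the zeros of \<open>Fm\<close>.\<close>
lemma minimizer_Cp_iff:
  assumes m: "m > 1" and p: "p \<ge> 2" and Cp: "Cp m p > 0"
  shows "(\<exists>V. is_minimizer (Fm m (Cp m p) p) (Rp p) V)
    \<and> (\<forall>V. is_minimizer (Fm m (Cp m p) p) (Rp p) V \<longleftrightarrow> V \<in> Rp p \<and> Fm m (Cp m p) p V = 0)"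
proof -
  obtain n where n: "p = Suc n" "n \<ge> 1" using p by (metis Suc_le_D Suc_le_mono one_add_one plus_1_eq_Suc)
  define s where "s = (SUP X\<in>Rp p. ratio m p X)"
  have chi: "Cp m p = 1 / s" unfolding Cp_def s_def ..
  hence s: "s > 0" using Cp by (simp add: zero_less_divide_iff)
  have "bdd_above (ratio m p ` Rp p)" using bdd_above_ratio[OF m n(2)] n(1) by simp
  hence le_s: "ratio m p X \<le> s" if "X \<in> Rp p" for X using that unfolding s_def by (simp add: cSUP_upper)
  have energy: "Fm m (Cp m p) p Y = (adjacent_energy m p (gap Y) - pair_energy m p (gap Y) / s) / (m-1)"
    and A: "adjacent_energy m p (gap Y) > 0" if "Y \<in> Rp p" for Y
    using Fm_gap[OF that, of m "Cp m p"] adjacent_energy_pos[OF p, of "gap Y" m] gap_pos[OF that] p chi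
    by auto
  have nonneg: "Fm m (Cp m p) p Y \<ge> 0" if Y: "Y \<in> Rp p" for Y
  proof -
    have "pair_energy m p (gap Y) \<le> s * adjacent_energy m p (gap Y)"
      using le_s[OF Y] A[OF Y] unfolding ratio_gap[OF Y] by (simp add: divide_le_eq)
    then show ?thesis unfolding energy[OF Y] using m s by (simp add: divide_le_eq mult.commute)
  qed
  obtain X where X: "X \<in> Rp p" "ratio m p X = s" using ratio_Sup_attained[OF m n(2)] n(1) s_def by blast
  have "pair_energy m p (gap X) = s * adjacent_energy m p (gap X)"
    using X A[OF X(1)] unfolding ratio_gap[OF X(1)] by (simp add: divide_eq_eq)
  hence "Fm m (Cp m p) p X = 0" unfolding energy[OF X(1)] using s by simp
  with X(1) nonneg show ?thesis unfolding is_minimizer_def by fastforce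
qed

lemma adjacent_gaps_proportional:
  assumes m: "m > 1" and g: "\<forall>l. Suc l < p \<longrightarrow> g l > 0" and g': "\<forall>l. Suc l < p \<longrightarrow> g' l > 0"
    and mid: "pair_energy m p (gap_path (m-1) (1/2) g g')
      \<le> (1 - 1/2) * pair_energy m p g + 1/2 * pair_energy m p g'"
  shows "\<forall>l. Suc (Suc l) < p \<longrightarrow> g l * g' (Suc l) = g' l * g (Suc l)"
proof (intro allI impI)
  fix l assume l: "Suc (Suc l) < p"
  have pos: "g l > 0" "g (Suc l) > 0" "g' l > 0" "g' (Suc l) > 0" using g g' l by auto
  have t: "0 \<le> (1/2::real)" "(1/2::real) \<le> 1" by auto
  define G where "G = gap_path (m-1) (1/2) g g'"
  have gap_sum_2: "gap_sum h l (Suc (Suc l)) = h l + h (Suc l)" for h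
    unfolding gap_sum_def by (simp add: numeral_2_eq_2)
  have "(G l + G (Suc l)) powr (-(m-1))
      = (1 - 1/2) * (g l + g (Suc l)) powr (-(m-1)) + 1/2 * (g' l + g' (Suc l)) powr (-(m-1))"
    using pair_energy_gap_path_term_eq[OF m g g' t mid, of l "Suc (Suc l)"] l
    unfolding G_def gap_sum_2 by simp
  also have "\<dots> = power_mean (m-1) (1/2) (g l + g (Suc l)) (g' l + g' (Suc l)) powr (-(m-1))"
    using pos m by (intro power_mean_powr[symmetric]) auto
  moreover have "G l + G (Suc l) > 0" using pos t unfolding G_def gap_path_def
    by (intro add_pos_pos power_mean_pos) auto
  moreover have "power_mean (m-1) (1/2) (g l + g (Suc l)) (g' l + g' (Suc l)) > 0"
    using pos by (intro power_mean_pos) auto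
  ultimately have "G l + G (Suc l) = power_mean (m-1) (1/2) (g l + g (Suc l)) (g' l + g' (Suc l))"
    using powr_neg_powr_inverse[of "m-1"] m by (metis less_irrefl diff_gt_0_iff_gt)
  then show "g l * g' (Suc l) = g' l * g (Suc l)"
    using pos m unfolding G_def gap_path_def
    by (intro power_mean_superadditive_eq_imp_proportional[of "m-1" _ _ _ _ "1/2"]) auto
qed

lemma gaps_proportional:
  fixes g g' :: "nat \<Rightarrow> real"
  assumes g: "\<forall>l. Suc l < p \<longrightarrow> g l > 0"
    and adj: "\<forall>l. Suc (Suc l) < p \<longrightarrow> g l * g' (Suc l) = g' l * g (Suc l)"
  shows "\<forall>l. Suc l < p \<longrightarrow> g' l = g' 0 / g 0 * g l"
proof (intro allI impI)
  define c where "c = g' 0 / g 0"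
  fix l show "Suc l < p \<Longrightarrow> g' l = c * g l"
  proof (induction l)
    case (Suc l)
    hence "g l > 0" and "g l * g' (Suc l) = g' l * g (Suc l)" using g adj by auto
    with Suc have "g l * g' (Suc l) = g l * (c * g (Suc l))" by simp
    with \<open>g l > 0\<close> show ?case by simp
  qed (use g in \<open>auto simp: c_def\<close>)
qed

lemma minimizer_Cp_unique:
  assumes m: "m > 1" and p: "p \<ge> 2" and Cp: "Cp m p > 0"
    and V: "is_minimizer (Fm m (Cp m p) p) (Rp p) V" and V': "is_minimizer (Fm m (Cp m p) p) (Rp p) V'"
  shows "\<exists>c>0. V' = (\<lambda>i. c * V i)"
proof -
  define chi where "chi = Cp m p"
  have VR: "V \<in> Rp p" "V' \<in> Rp p" and zero: "Fm m chi p V = 0" "Fm m chi p V' = 0"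
    using minimizer_Cp_iff[OF m p Cp] V V' unfolding chi_def by auto
  have nonneg: "Fm m chi p Y \<ge> 0" if "Y \<in> Rp p" for Y
    using V that zero unfolding is_minimizer_def chi_def by force
  define g where "g = gap V"
  define g' where "g' = gap V'"
  have g: "\<forall>l. Suc l < p \<longrightarrow> g l > 0" and g': "\<forall>l. Suc l < p \<longrightarrow> g' l > 0"
    unfolding g_def g'_def using gap_pos VR by blast+
  have t: "0 \<le> (1/2::real)" "(1/2::real) \<le> 1" by auto
  define G where "G = gap_path (m-1) (1/2) g g'"
  have G: "\<forall>l. Suc l < p \<longrightarrow> G l > 0" unfolding G_def using gap_path_pos[OF m g g' t] .
  have p1: "p \<ge> 1" using p by simp
  have energy: "Fm m chi p (of_gaps p h) = (adjacent_energy m p h - chi * pair_energy m p h) / (m-1)"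
    if "\<forall>l. Suc l < p \<longrightarrow> h l > 0" for h
    using Fma_of_gaps[OF that p1, of m chi 0] by (simp add: diff_divide_distrib)
  have "Fm m chi p (of_gaps p G) \<ge> 0" using nonneg[OF of_gaps_in_Rp[OF G]] .
  hence "chi * pair_energy m p G \<le> adjacent_energy m p G"
    unfolding energy[OF G] using m by (simp add: zero_le_divide_iff)
  also have "\<dots> = (1 - 1/2) * adjacent_energy m p g + 1/2 * adjacent_energy m p g'"
    unfolding G_def by (rule adjacent_energy_gap_path[OF m g g' t])
  also have "\<dots> = chi * ((1 - 1/2) * pair_energy m p g + 1/2 * pair_energy m p g')"
    using zero energy[OF g] energy[OF g'] m unfolding g_def g'_def of_gaps_gap[OF VR(1)] of_gaps_gap[OF VR(2)]
    by (simp add: algebra_simps)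
  finally have "pair_energy m p G \<le> (1 - 1/2) * pair_energy m p g + 1/2 * pair_energy m p g'"
    using Cp unfolding chi_def by simp
  hence "\<forall>l. Suc l < p \<longrightarrow> g' l = g' 0 / g 0 * g l"
    using adjacent_gaps_proportional[OF m g g'] gaps_proportional[OF g] unfolding G_def by blast
  hence "V' = of_gaps p (\<lambda>l. g' 0 / g 0 * g l)"
    using of_gaps_cong of_gaps_gap[OF VR(2)] unfolding g'_def by metis
  moreover have "g' 0 / g 0 > 0" using g g' p by simp
  ultimately show ?thesis unfolding of_gaps_scale g_def of_gaps_gap[OF VR(1)] by blast
qed

theorem theorem3p1:
  fixes m chi alpha :: real and p :: nat
  assumes "m > 1" and "chi > 0" and "p \<ge> 2"
  shows "(alpha \<ge> 0 \<longrightarrow>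
            (\<forall>X. critical_point m chi alpha p X \<longrightarrow> is_minimizer (Fma m chi alpha p) (Rp p) X))
       \<and> (chi = Cp m p \<longrightarrow>
            (\<exists>V. is_minimizer (Fm m chi p) (Rp p) V) \<and>
            (\<forall>V V'. is_minimizer (Fm m chi p) (Rp p) V \<and> is_minimizer (Fm m chi p) (Rp p) V'
                 \<longrightarrow> (\<exists>l>0. V' = (\<lambda>i. l * V i))))"
proof (intro conjI impI allI)
  fix X assume "alpha \<ge> 0" and c: "critical_point m chi alpha p X"
  then show "is_minimizer (Fma m chi alpha p) (Rp p) X"
    using critical_point_minimal[OF assms(1) _ _ _ c] assms c
    unfolding is_minimizer_def critical_point_def by auto
next
  assume "chi = Cp m p"
  then show "\<exists>V. is_minimizer (Fm m chi p) (Rp p) V"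
    and "\<And>V V'. is_minimizer (Fm m chi p) (Rp p) V \<and> is_minimizer (Fm m chi p) (Rp p) V'
      \<Longrightarrow> \<exists>l>0. V' = (\<lambda>i. l * V i)"
    using minimizer_Cp_iff minimizer_Cp_unique assms by blast+
qed

end
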